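(* Let $c>0$, $D>0$, $k>0$, and let $u(\theta,\varphi,t)$ be the solution described in the context, where the angular power spectrum $\{C_l,\ l=0,1,2,\dots\}$ of the initial field $T$ satisfies \[ \sum_{l=0}^{\infty }(2l+1)^3C_{l}<\infty. \] Then there exists a constant $C$, depending only on $c$, $D$ and $k$, such that for all $t>0$ \[ \|u(\theta ,\varphi ,t+h)-u(\theta ,\varphi ,t)\|_{L_2(\Omega \times\mathbb S^{2})} \le Ch\quad\text{as } h\to 0+. \]
   Context: On the unit sphere with coordinates $(\theta,\varphi)\in[0,\pi)\times[0,2\pi)$ and measure $\sin\theta\,d\theta\,d\varphi$, $Y_{lm}(\theta,\varphi)=d_{lm}e^{im\varphi}P_l^m(\cos\theta)$, $d_{lm}=(-1)^m\big[\frac{(2l+1)(l-m)!}{4\pi(l+m)!}\big]^{1/2}$, are complex spherical harmonics; $\mathbf 0$ denotes $\theta=\varphi=0$. $T=\sum_{l,m}a_{lm}Y_{lm}$ is a real Gaussian isotropic field with $a_{lm}$ complex Gaussian, $a_{lm}=(-1)^ma_{l,-m}$, $\mathbf E a_{lm}=0$, $\mathbf Ea_{lm}\overline{a_{l'm'}}=\delta_l^{l'}\delta_m^{m'}C_l$, independent for $m\ne-m'$. The solution of $\frac1{c^2}u_{tt}+\frac1Du_t=k^2\Delta_{(\theta,\varphi)}u$ ($\Delta_{(\theta,\varphi)}$ the Laplace–Beltrami operator), $u|_{t=0}=T$, $u_t|_{t=0}=0$, is $u(\theta,\varphi,t)=\exp(-\frac{c^2t}{2D})\sum_{l\ge0}\sum_{m=-l}^lY_{lm}(\theta,\varphi)\xi_{lm}(t)$,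 with $\xi_{lm}(t)=\sqrt{\frac{4\pi}{2l+1}}a_{lm}\overline{Y_{l0}(\mathbf 0)}[A_l(t)+B_l(t)]$, $A_l(t)=[\cosh(tK_l)+\frac{c^2}{2DK_l}\sinh(tK_l)]\mathbf 1_{\{l\le l^*\}}$, $B_l(t)=[\cos(tK_l')+\frac{c^2}{2DK_l'}\sin(tK_l')]\mathbf 1_{\{l>l^*\}}$, $K_l=\sqrt{\frac{c^4}{4D^2}-c^2l(l+1)k^2}$, $K_l'=\sqrt{c^2l(l+1)k^2-\frac{c^4}{4D^2}}$, $l^*=\frac{\sqrt{D^2k^2+c^2}-Dk}{2Dk}$ (with $\sinh(tK_l)/K_l:=t$ if $K_l=0$). $\|X\|_{L_2(\Omega\times\mathbb S^2)}=(\mathbf E\int_{\mathbb S^2}|X|^2\sin\theta\,d\theta\,d\varphi)^{1/2}$. *)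

theory Defs
  imports "HOL-Probability.Probability" "HOL-Computational_Algebra.Polynomial"
begin

definition legendre_poly :: "nat \<Rightarrow> real poly" where
  "legendre_poly l = smult (1 / (2 ^ l * fact l)) ((pderiv ^^ l) ([:-1, 0, 1:] ^ l))"

text \<open>Associated Legendre function P_l^m (no Condon-Shortley phase; the sign (-1)^m
  is contained in the normalising constant d_lm), extended to negative m by
  P_l^{-m} = (-1)^m (l-m)!/(l+m)! P_l^m.\<close>
definition assoc_legendre :: "nat \<Rightarrow> int \<Rightarrow> real \<Rightarrow> real" where
  "assoc_legendre l m x =
     (let n = nat \<bar>m\<bar>;
          p = sqrt (1 - x\<^sup>2) ^ n * poly ((pderiv ^^ n) (legendre_poly l)) x
      in if 0 \<le> m then p else (-1) ^ n * fact (l - n) / fact (l + n) * p)"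

definition sh_const :: "nat \<Rightarrow> int \<Rightarrow> real" where
  "sh_const l m = (-1) ^ nat \<bar>m\<bar> *
     sqrt ((2 * real l + 1) * fact (nat (int l - m)) / (4 * pi * fact (nat (int l + m))))"

definition sph_harm :: "nat \<Rightarrow> int \<Rightarrow> real \<Rightarrow> real \<Rightarrow> complex" where
  "sph_harm l m \<theta> \<phi> = complex_of_real (sh_const l m) * cis (real_of_int m * \<phi>)
                        * complex_of_real (assoc_legendre l m (cos \<theta>))"

text \<open>Real field:
  a_{l,-m} = (-1)^m conj(a_lm); the family of Re a_l0, Re a_lm, Im a_lm (1 \<le> m \<le> l)
  is independent centred Gaussian with variances C_l, C_l/2, C_l/2, so that
  E a_lm conj(a_l'm') = \<delta> \<delta> C_l.\<close>
definition gaussian_isotropic_coeffs ::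
  "'a measure \<Rightarrow> (nat \<Rightarrow> real) \<Rightarrow> (nat \<Rightarrow> int \<Rightarrow> 'a \<Rightarrow> complex) \<Rightarrow> bool" where
  "gaussian_isotropic_coeffs M C a \<longleftrightarrow>
     prob_space M \<and> (\<forall>l. 0 \<le> C l) \<and>
     (\<forall>l m. a l m \<in> borel_measurable M) \<and>
     (\<forall>l m. \<bar>m\<bar> \<le> int l \<longrightarrow>
        (\<forall>\<omega>\<in>space M. a l (- m) \<omega> = (-1) ^ nat \<bar>m\<bar> * cnj (a l m \<omega>))) \<and>
     prob_space.indep_vars M (\<lambda>_. borel)
        (\<lambda>(l, m, b) \<omega>. if b then Re (a l m \<omega>) else Im (a l m \<omega>))
        {(l, m, b). 0 \<le> m \<and> m \<le> int l \<and> (m = 0 \<longrightarrow> b)} \<and>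
     (\<forall>l m. C l = 0 \<longrightarrow> (AE \<omega> in M. a l m \<omega> = 0)) \<and>
     (\<forall>l. 0 < C l \<longrightarrow>
        distributed M lborel (\<lambda>\<omega>. Re (a l 0 \<omega>)) (normal_density 0 (sqrt (C l)))) \<and>
     (\<forall>l m. 0 < C l \<and> 1 \<le> m \<and> m \<le> int l \<longrightarrow>
        distributed M lborel (\<lambda>\<omega>. Re (a l m \<omega>)) (normal_density 0 (sqrt (C l / 2))) \<and>
        distributed M lborel (\<lambda>\<omega>. Im (a l m \<omega>)) (normal_density 0 (sqrt (C l / 2))))"

definition shc :: "real \<Rightarrow> real \<Rightarrow> real" where
  "shc t K = (if K = 0 then t else sinh (t * K) / K)"

definition lstar :: "real \<Rightarrow> real \<Rightarrow> real \<Rightarrow> real" where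
  "lstar c D k = (sqrt (D\<^sup>2 * k\<^sup>2 + c\<^sup>2) - D * k) / (2 * D * k)"

definition Kl :: "real \<Rightarrow> real \<Rightarrow> real \<Rightarrow> nat \<Rightarrow> real" where
  "Kl c D k l = sqrt (c ^ 4 / (4 * D\<^sup>2) - c\<^sup>2 * real l * (real l + 1) * k\<^sup>2)"

definition Kl' :: "real \<Rightarrow> real \<Rightarrow> real \<Rightarrow> nat \<Rightarrow> real" where
  "Kl' c D k l = sqrt (c\<^sup>2 * real l * (real l + 1) * k\<^sup>2 - c ^ 4 / (4 * D\<^sup>2))"

definition Al :: "real \<Rightarrow> real \<Rightarrow> real \<Rightarrow> nat \<Rightarrow> real \<Rightarrow> real" where
  "Al c D k l t = (if real l \<le> lstar c D k
      then cosh (t * Kl c D k l) + c\<^sup>2 / (2 * D) * shc t (Kl c D k l) else 0)"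

definition Bl :: "real \<Rightarrow> real \<Rightarrow> real \<Rightarrow> nat \<Rightarrow> real \<Rightarrow> real" where
  "Bl c D k l t = (if real l > lstar c D k
      then cos (t * Kl' c D k l) + c\<^sup>2 / (2 * D * Kl' c D k l) * sin (t * Kl' c D k l) else 0)"

definition xi :: "(nat \<Rightarrow> int \<Rightarrow> 'a \<Rightarrow> complex) \<Rightarrow> real \<Rightarrow> real \<Rightarrow> real \<Rightarrow> nat \<Rightarrow> int \<Rightarrow> real \<Rightarrow> 'a \<Rightarrow> complex" where
  "xi a c D k l m t \<omega> = complex_of_real (sqrt (4 * pi / (2 * real l + 1))) * a l m \<omega>
      * cnj (sph_harm l 0 0 0) * complex_of_real (Al c D k l t + Bl c D k l t)"

definition sol :: "(nat \<Rightarrow> int \<Rightarrow> 'a \<Rightarrow> complex) \<Rightarrow> real \<Rightarrow> real \<Rightarrow> real \<Rightarrow> real \<Rightarrow> real \<Rightarrow> real \<Rightarrow> 'a \<Rightarrow> complex" where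
  "sol a c D k \<theta> \<phi> t \<omega> = complex_of_real (exp (- (c\<^sup>2 * t) / (2 * D))) *
      (\<Sum>l. \<Sum>m\<in>{- int l..int l}. sph_harm l m \<theta> \<phi> * xi a c D k l m t \<omega>)"

definition L2_sphere_norm :: "'a measure \<Rightarrow> (real \<Rightarrow> real \<Rightarrow> 'a \<Rightarrow> complex) \<Rightarrow> ennreal" where
  "L2_sphere_norm M X =
     (let I = (\<integral>\<^sup>+ \<omega>. (\<integral>\<^sup>+ p. indicator ({0..<pi} \<times> {0..<2 * pi}) p *
                  ennreal ((cmod (X (fst p) (snd p) \<omega>))\<^sup>2 * sin (fst p)) \<partial>lborel) \<partial>M)
      in if I = \<infinity> then \<infinity> else ennreal (sqrt (enn2real I)))"

end

(* The solution is the random series u(t) = sum_l g_l(t) T_l, where T_l = sum_m a_lm Y_lm is the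
   degree-l component of the initial field and g_l(t) = exp(-c^2 t/(2D)) (A_l(t) + B_l(t)) is a
   deterministic damped mode.  Every g_l is Lipschitz on [0, oo) with constant (c^2/D + c k)(l + 1).
   Taking the expectation before integrating over the sphere, only the normalisation of each Y_lm
   and the covariances E a_lm conj(a_l'm') = delta C_l are needed to see that a finite sum
   sum_l d_l T_l has mean-square norm sum_l |d_l|^2 (2l + 1) C_l; for
   d_l = g_l(t + h) - g_l(t) this is at most h^2 (c^2/D + c k)^2 sum_l (2l + 1)^3 C_l.
   The same moment condition makes sum_l |T_l| finite almost everywhere, so the partial sums
   converge pointwise to u(t + h) - u(t), and Fatou's lemma passes the bound to the limit. *)

theory Submission
  imports Defs
begin

section \<open>Legendre polynomials\<close>

definition poly_integral :: "real poly \<Rightarrow> real" where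
  "poly_integral q = integral {-1..1} (poly q)"

lemma poly_integrable_on: "poly (p :: real poly) integrable_on {a..b}"
  by (intro integrable_continuous_interval continuous_intros)

lemma poly_integral_add: "poly_integral (p + q) = poly_integral p + poly_integral q"
  unfolding poly_integral_def by (simp add: poly_add[abs_def] integral_add poly_integrable_on)

lemma poly_integral_smult: "poly_integral (smult c p) = c * poly_integral p"
  unfolding poly_integral_def by (simp add: poly_smult[abs_def])

lemma poly_integral_1: "poly_integral 1 = 2"
proof -
  have "poly 1 = (\<lambda>_. 1 :: real)"
    by auto
  then show ?thesis
    unfolding poly_integral_def by simp
qed

lemma poly_integral_pderiv: "poly_integral (pderiv p) = poly p 1 - poly p (-1)"
proof -
  have "(poly (pderiv p) has_integral poly p 1 - poly p (-1)) {-1..1}"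
    by (intro fundamental_theorem_of_calculus)
       (auto intro: DERIV_subset[OF poly_DERIV] simp flip: has_real_derivative_iff_has_vector_derivative)
  then show ?thesis
    unfolding poly_integral_def by (rule integral_unique)
qed

lemma poly_integral_by_parts:
  "poly_integral (p * pderiv r) = poly (p * r) 1 - poly (p * r) (-1) - poly_integral (pderiv p * r)"
  using poly_integral_pderiv[of "p * r"] by (simp add: pderiv_mult poly_integral_add mult.commute)

lemma surj_pderiv: "surj (pderiv :: real poly \<Rightarrow> real poly)"
proof -
  have "pderiv (\<Sum>i\<le>degree q. monom (coeff q i / real (Suc i)) (Suc i)) = q" for q :: "real poly"
  proof -
    have "pderiv (\<Sum>i\<le>degree q. monom (coeff q i / real (Suc i)) (Suc i))
        = (\<Sum>i\<le>degree q. monom (coeff q i) i)"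
      by (simp add: higher_pderiv_sum[of 1, simplified] pderiv_monom del: of_nat_Suc)
    then show ?thesis
      by (simp add: poly_as_sum_of_monoms)
  qed
  then show ?thesis
    unfolding surj_def by metis
qed

lemma has_integral_poly_cos_sin:
  "((\<lambda>\<theta>. poly q (cos \<theta>) * sin \<theta>) has_integral poly_integral q) {0..pi}"
proof -
  obtain F where F: "pderiv F = q"
    using surj_pderiv by (metis surjD)
  have "((\<lambda>\<theta>. poly q (cos \<theta>) * sin \<theta>) has_integral (- poly F (cos pi)) - (- poly F (cos 0))) {0..pi}"
  proof (rule fundamental_theorem_of_calculus)
    fix x assume "x \<in> {0..pi}"
    have "((\<lambda>\<theta>. - poly F (cos \<theta>)) has_real_derivative poly q (cos x) * sin x) (at x)"
      unfolding F[symmetric]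
      by (rule derivative_eq_intros poly_DERIV[THEN DERIV_chain2] refl | simp)+
    then show "((\<lambda>\<theta>. - poly F (cos \<theta>)) has_vector_derivative poly q (cos x) * sin x) (at x within {0..pi})"
      by (simp add: has_real_derivative_iff_has_vector_derivative[symmetric] has_field_derivative_at_within)
  qed simp
  then show ?thesis
    using poly_integral_pderiv[of F] F by simp
qed

definition xsq_minus_1 :: "real poly" where
  "xsq_minus_1 = [:-1, 0, 1:]"

definition one_minus_xsq :: "real poly" where
  "one_minus_xsq = [:1, 0, -1:]"

lemma poly_xsq_minus_1 [simp]: "poly xsq_minus_1 x = x\<^sup>2 - 1"
  by (simp add: xsq_minus_1_def power2_eq_square)

lemma poly_one_minus_xsq [simp]: "poly one_minus_xsq x = 1 - x\<^sup>2"
  by (simp add: one_minus_xsq_def power2_eq_square)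

lemma pderiv_xsq_minus_1: "pderiv xsq_minus_1 = [:0, 2:]"
  by (simp add: xsq_minus_1_def pderiv_pCons)

lemma pderiv_one_minus_xsq: "pderiv one_minus_xsq = [:0, -2:]"
  by (simp add: one_minus_xsq_def pderiv_pCons)

lemma poly_eqI_real: "(\<And>x. poly p x = poly q x) \<Longrightarrow> p = (q :: real poly)"
  using poly_eq_poly_eq_iff[of p q] by auto

lemma higher_pderiv_xsq_minus_1_power:
  assumes "j \<le> l"
  shows "\<exists>R. (pderiv ^^ j) (xsq_minus_1 ^ l) = xsq_minus_1 ^ (l - j) * R
             \<and> poly R 1 = 2 ^ j * fact l / fact (l - j)"
  using assms
proof (induction j)
  case 0
  then show ?case by (intro exI[of _ 1]) simp
next
  case (Suc j)
  then obtain R where R: "(pderiv ^^ j) (xsq_minus_1 ^ l) = xsq_minus_1 ^ (l - j) * R"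
      "poly R 1 = 2 ^ j * fact l / fact (l - j)"
    by auto
  obtain n where n: "l - j = Suc n"
    using Suc.prems by (metis Suc_diff_le Suc_le_lessD diff_Suc_Suc)
  define R' where "R' = xsq_minus_1 * pderiv R + smult (of_nat (Suc n)) ([:0, 2:] * R)"
  have "(pderiv ^^ Suc j) (xsq_minus_1 ^ l) = xsq_minus_1 ^ n * R'"
    by (simp only: funpow.simps comp_apply R(1) n pderiv_mult pderiv_power_Suc pderiv_xsq_minus_1)
       (simp add: R'_def algebra_simps)
  moreover have "poly R' 1 = 2 ^ Suc j * fact l / fact n"
  proof -
    have "poly R' 1 = 2 * real (Suc n) * (2 ^ j * fact l / fact (Suc n))"
      using R(2) n by (simp add: R'_def)
    then show ?thesis
      by (simp add: divide_simps del: of_nat_Suc)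
  qed
  moreover have "l - Suc j = n"
    using n by simp
  ultimately show ?case
    by auto
qed

lemma poly_higher_pderiv_xsq_minus_1_power_pm1:
  assumes "j < l"
  shows "poly ((pderiv ^^ j) (xsq_minus_1 ^ l)) 1 = 0"
    and "poly ((pderiv ^^ j) (xsq_minus_1 ^ l)) (-1) = 0"
  using higher_pderiv_xsq_minus_1_power[of j l] assms by (auto simp: power_0_left)

lemma poly_higher_pderiv_xsq_minus_1_power_1:
  "poly ((pderiv ^^ l) (xsq_minus_1 ^ l)) 1 = 2 ^ l * fact l"
  using higher_pderiv_xsq_minus_1_power[of l l] by auto

lemma higher_pderiv_xsq_minus_1_power_top:
  "(pderiv ^^ (2 * l)) (xsq_minus_1 ^ l) = [:fact (2 * l):]"
proof (rule poly_eqI)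
  have deg: "degree (xsq_minus_1 ^ l) = 2 * l"
    by (simp add: degree_power_eq xsq_minus_1_def)
  have lc: "coeff (xsq_minus_1 ^ l) (2 * l) = 1"
    using lead_coeff_power[of xsq_minus_1 l] deg by (simp add: xsq_minus_1_def)
  fix i
  show "coeff ((pderiv ^^ (2 * l)) (xsq_minus_1 ^ l)) i = coeff [:fact (2 * l):] i"
    using coeff_eq_0[of "xsq_minus_1 ^ l" "i + 2 * l"] deg
    by (cases i) (auto simp: coeff_higher_pderiv lc pochhammer_fact)
qed

text \<open>Differentiating \<open>(x\<^sup>2 - 1) Q' = 2 l x Q\<close>, \<open>Q = (x\<^sup>2 - 1)\<^sup>l\<close>, \<open>j + 1\<close> times by Leibniz' rule.\<close>

lemma xsq_minus_1_power_ode: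
  "xsq_minus_1 * (pderiv ^^ Suc (Suc j)) (xsq_minus_1 ^ l)
   + smult (2 * (real j + 1) - 2 * real l) ([:0, 1:] * (pderiv ^^ Suc j) (xsq_minus_1 ^ l))
   + smult ((real j + 1) * (real j - 2 * real l)) ((pderiv ^^ j) (xsq_minus_1 ^ l)) = 0"
  (is "?E j = 0")
proof (induction j)
  case 0
  have "xsq_minus_1 * pderiv (xsq_minus_1 ^ l) - smult (2 * real l) ([:0, 1:] * xsq_minus_1 ^ l) = 0"
  proof (cases l)
    case (Suc n)
    show ?thesis
      unfolding Suc pderiv_power_Suc pderiv_xsq_minus_1
      by (rule poly_eqI_real) (simp add: algebra_simps)
  qed simp
  moreover have "pderiv (xsq_minus_1 * pderiv (xsq_minus_1 ^ l)
      - smult (2 * real l) ([:0, 1:] * xsq_minus_1 ^ l)) = ?E 0"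
    by (rule poly_eqI_real)
       (simp add: pderiv_mult pderiv_xsq_minus_1 pderiv_pCons pderiv_diff pderiv_smult algebra_simps)
  ultimately show ?case
    by simp
next
  case (Suc j)
  have "pderiv (?E j) = ?E (Suc j)"
    by (rule poly_eqI_real)
       (simp add: pderiv_mult pderiv_xsq_minus_1 pderiv_pCons pderiv_add pderiv_smult algebra_simps)
  then show ?case
    using Suc by simp
qed

lemma pderiv_one_minus_xsq_power_higher_pderiv:
  "pderiv (one_minus_xsq ^ Suc n * (pderiv ^^ Suc (l + n)) (xsq_minus_1 ^ l))
     = smult (- (real l + real n + 1) * (real l - real n))
         (one_minus_xsq ^ n * (pderiv ^^ (l + n)) (xsq_minus_1 ^ l))"
proof (rule poly_eqI_real)
  fix x :: real
  define d0 where "d0 = poly ((pderiv ^^ (l + n)) (xsq_minus_1 ^ l)) x"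
  define d1 where "d1 = poly ((pderiv ^^ Suc (l + n)) (xsq_minus_1 ^ l)) x"
  define d2 where "d2 = poly ((pderiv ^^ Suc (Suc (l + n))) (xsq_minus_1 ^ l)) x"
  have ode: "(1 - x\<^sup>2) * d2 = (2 * real n + 2) * x * d1 + (real l + real n + 1) * (real n - real l) * d0"
    using arg_cong[OF xsq_minus_1_power_ode[of "l + n" l], of "\<lambda>p. poly p x"]
    unfolding d0_def d1_def d2_def by (simp add: algebra_simps)
  have "poly (pderiv (one_minus_xsq ^ Suc n * (pderiv ^^ Suc (l + n)) (xsq_minus_1 ^ l))) x
      = (real n + 1) * (1 - x\<^sup>2) ^ n * (-2 * x) * d1 + (1 - x\<^sup>2) ^ n * ((1 - x\<^sup>2) * d2)"
    unfolding d1_def d2_def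
    by (simp only: pderiv_mult pderiv_power_Suc pderiv_one_minus_xsq funpow.simps comp_apply)
       (simp add: algebra_simps)
  also have "\<dots> = (1 - x\<^sup>2) ^ n * ((real l + real n + 1) * (real n - real l) * d0)"
    unfolding ode by (simp add: algebra_simps)
  also have "\<dots> = poly (smult (- (real l + real n + 1) * (real l - real n))
          (one_minus_xsq ^ n * (pderiv ^^ (l + n)) (xsq_minus_1 ^ l))) x"
    unfolding d0_def by (simp add: algebra_simps)
  finally show "poly (pderiv (one_minus_xsq ^ Suc n * (pderiv ^^ Suc (l + n)) (xsq_minus_1 ^ l))) x = \<dots>" .
qed

definition rodrigues_integral :: "nat \<Rightarrow> nat \<Rightarrow> real" where
  "rodrigues_integral l n =
     poly_integral (one_minus_xsq ^ n * ((pderiv ^^ (l + n)) (xsq_minus_1 ^ l))\<^sup>2)"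

lemma rodrigues_integral_Suc:
  "rodrigues_integral l (Suc n) = (real l + real n + 1) * (real l - real n) * rodrigues_integral l n"
proof -
  let ?W = "one_minus_xsq ^ Suc n * (pderiv ^^ Suc (l + n)) (xsq_minus_1 ^ l)"
  have "rodrigues_integral l (Suc n) = poly_integral (?W * pderiv ((pderiv ^^ (l + n)) (xsq_minus_1 ^ l)))"
    unfolding rodrigues_integral_def by (simp add: power2_eq_square algebra_simps)
  also have "\<dots> = - poly_integral (pderiv ?W * (pderiv ^^ (l + n)) (xsq_minus_1 ^ l))"
    by (subst poly_integral_by_parts) (simp add: one_minus_xsq_def power_0_left)
  also have "\<dots> = (real l + real n + 1) * (real l - real n) * rodrigues_integral l n"
    unfolding pderiv_one_minus_xsq_power_higher_pderiv rodrigues_integral_def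
    by (simp add: poly_integral_smult power2_eq_square algebra_simps)
  finally show ?thesis .
qed

lemma rodrigues_integral_eq:
  "n \<le> l \<Longrightarrow> rodrigues_integral l n = rodrigues_integral l 0 * fact (l + n) / fact (l - n)"
proof (induction n)
  case (Suc n)
  obtain m where m: "l - n = Suc m"
    using Suc.prems by (metis Suc_diff_le Suc_le_lessD diff_Suc_Suc)
  have "real l - real n = real m + 1"
    using m Suc.prems by linarith
  then have "rodrigues_integral l (Suc n)
      = (real l + real n + 1) * (real m + 1) * (rodrigues_integral l 0 * fact (l + n) / fact (Suc m))"
    using Suc m by (simp add: rodrigues_integral_Suc del: fact_Suc)
  also have "\<dots> = rodrigues_integral l 0 * ((real l + real n + 1) * fact (l + n)) / fact m"
  proof -
    have "fact (Suc m) = (real m + 1) * (fact m :: real)" "real m + 1 \<noteq> 0"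
      by simp_all
    then show ?thesis
      by (simp only:) (simp add: divide_simps)
  qed
  moreover have "l - Suc n = m"
    using m by simp
  ultimately show ?case
    by (simp add: algebra_simps)
qed simp

lemma poly_integral_higher_pderiv_xsq_minus_1_power_square:
  assumes "j \<le> l"
  shows "poly_integral ((pderiv ^^ l) (xsq_minus_1 ^ l) * (pderiv ^^ l) (xsq_minus_1 ^ l))
       = (-1) ^ j * poly_integral ((pderiv ^^ (l + j)) (xsq_minus_1 ^ l) * (pderiv ^^ (l - j)) (xsq_minus_1 ^ l))"
  using assms
proof (induction j)
  case (Suc j)
  obtain m where m: "l - j = Suc m"
    using Suc.prems by (metis Suc_diff_le Suc_le_lessD diff_Suc_Suc)
  then have "m < l" "l - Suc j = m"
    by auto
  then have "poly_integral ((pderiv ^^ (l + j)) (xsq_minus_1 ^ l) * pderiv ((pderiv ^^ m) (xsq_minus_1 ^ l)))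
      = - poly_integral ((pderiv ^^ (l + Suc j)) (xsq_minus_1 ^ l) * (pderiv ^^ (l - Suc j)) (xsq_minus_1 ^ l))"
    by (subst poly_integral_by_parts) (simp add: poly_higher_pderiv_xsq_minus_1_power_pm1)
  then show ?case
    using Suc m by simp
qed simp

lemma poly_integral_xsq_minus_1_power_Suc:
  "(2 * real n + 3) * poly_integral (xsq_minus_1 ^ Suc n)
     = - 2 * (real n + 1) * poly_integral (xsq_minus_1 ^ n)"
proof -
  have x_pderiv: "pderiv (xsq_minus_1 ^ Suc n) * [:0, 1:]
      = smult (2 * (real n + 1)) (xsq_minus_1 ^ Suc n + xsq_minus_1 ^ n)"
    unfolding pderiv_power_Suc pderiv_xsq_minus_1
    by (rule poly_eqI_real) (simp add: algebra_simps power2_eq_square)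
  have "poly_integral (xsq_minus_1 ^ Suc n) = poly_integral (xsq_minus_1 ^ Suc n * pderiv [:0, 1:])"
    by (simp add: pderiv_pCons)
  also have "\<dots> = - poly_integral (pderiv (xsq_minus_1 ^ Suc n) * [:0, 1:])"
    by (subst poly_integral_by_parts) simp
  also have "\<dots> = - 2 * (real n + 1) * (poly_integral (xsq_minus_1 ^ Suc n) + poly_integral (xsq_minus_1 ^ n))"
    unfolding x_pderiv by (simp add: poly_integral_smult poly_integral_add algebra_simps)
  finally show ?thesis
    by (simp add: algebra_simps)
qed

lemma poly_integral_xsq_minus_1_power:
  "fact (2 * n + 1) * poly_integral (xsq_minus_1 ^ n) = (-1) ^ n * 2 ^ (2 * n + 1) * fact n ^ 2"
proof (induction n)
  case 0
  then show ?case
    by (simp add: poly_integral_1)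
next
  case (Suc n)
  have "fact (2 * Suc n + 1) = (2 * real n + 2) * (2 * real n + 3) * (fact (2 * n + 1) :: real)"
    by (simp add: algebra_simps)
  then have "fact (2 * Suc n + 1) * poly_integral (xsq_minus_1 ^ Suc n)
      = (2 * real n + 2) * fact (2 * n + 1) * ((2 * real n + 3) * poly_integral (xsq_minus_1 ^ Suc n))"
    by (simp only: mult_ac)
  also have "\<dots> = - 4 * (real n + 1) ^ 2 * (fact (2 * n + 1) * poly_integral (xsq_minus_1 ^ n))"
    by (simp only: poly_integral_xsq_minus_1_power_Suc) (simp add: power2_eq_square algebra_simps)
  also have "\<dots> = (-1) ^ Suc n * 2 ^ (2 * Suc n + 1) * fact (Suc n) ^ 2"
    unfolding Suc by (simp add: power_mult_distrib)
  finally show ?case .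
qed

lemma rodrigues_integral_0: "(2 * real l + 1) * rodrigues_integral l 0 = 2 ^ (2 * l + 1) * fact l ^ 2"
proof -
  have "rodrigues_integral l 0
      = (-1) ^ l * poly_integral ((pderiv ^^ (2 * l)) (xsq_minus_1 ^ l) * xsq_minus_1 ^ l)"
    using poly_integral_higher_pderiv_xsq_minus_1_power_square[of l l]
    by (simp add: rodrigues_integral_def power2_eq_square mult_2)
  also have "\<dots> = (-1) ^ l * fact (2 * l) * poly_integral (xsq_minus_1 ^ l)"
    by (simp add: higher_pderiv_xsq_minus_1_power_top poly_integral_smult)
  finally have "(2 * real l + 1) * rodrigues_integral l 0
      = (-1) ^ l * (fact (2 * l + 1) * poly_integral (xsq_minus_1 ^ l))"
    by (simp only: fact_Suc Suc_eq_plus1[symmetric]) (simp add: mult_ac)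
  also have "\<dots> = ((-1) ^ l * (-1) ^ l) * 2 ^ (2 * l + 1) * fact l ^ 2"
    unfolding poly_integral_xsq_minus_1_power by (simp only: mult_ac)
  finally show ?thesis
    by (simp flip: power_add)
qed

lemma higher_pderiv_legendre_poly:
  "(pderiv ^^ n) (legendre_poly l) = smult (1 / (2 ^ l * fact l)) ((pderiv ^^ (l + n)) (xsq_minus_1 ^ l))"
proof -
  have "(pderiv ^^ n) ((pderiv ^^ l) p) = (pderiv ^^ (l + n)) p" for p :: "real poly"
    by (metis add.commute comp_apply funpow_add)
  then show ?thesis
    by (simp add: legendre_poly_def xsq_minus_1_def higher_pderiv_smult)
qed

lemma poly_integral_legendre_poly_square:
  assumes "n \<le> l"
  shows "poly_integral (one_minus_xsq ^ n * ((pderiv ^^ n) (legendre_poly l))\<^sup>2)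
       = 2 * fact (l + n) / ((2 * real l + 1) * fact (l - n))"
proof -
  have pos: "2 * real l + 1 \<noteq> 0" "(2 ^ l * fact l :: real) \<noteq> 0"
    by simp_all
  have "2 * (2 ^ l * fact l) ^ 2 = (2::real) ^ (2 * l + 1) * fact l ^ 2"
    by (simp add: power_mult_distrib power_add mult.commute flip: power_mult)
  then have R0: "rodrigues_integral l 0 = 2 * (2 ^ l * fact l) ^ 2 / (2 * real l + 1)"
    using rodrigues_integral_0[of l] pos by (simp add: eq_divide_eq mult.commute)
  have "poly_integral (one_minus_xsq ^ n * ((pderiv ^^ n) (legendre_poly l))\<^sup>2)
      = rodrigues_integral l n / (2 ^ l * fact l) ^ 2"
    by (simp add: higher_pderiv_legendre_poly rodrigues_integral_def power2_eq_square
        poly_integral_smult)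
  also have "\<dots> = 2 * fact (l + n) / ((2 * real l + 1) * fact (l - n))"
    using pos by (simp add: rodrigues_integral_eq[OF assms] R0)
  finally show ?thesis .
qed

lemma poly_legendre_poly_1: "poly (legendre_poly l) 1 = 1"
  using higher_pderiv_legendre_poly[of 0 l] poly_higher_pderiv_xsq_minus_1_power_1[of l] by simp

section \<open>Spherical harmonics\<close>

lemma sh_const_abs_square:
  "(sh_const l \<bar>m\<bar>)\<^sup>2 = (2 * real l + 1) * fact (l - nat \<bar>m\<bar>) / (4 * pi * fact (l + nat \<bar>m\<bar>))"
  unfolding sh_const_def by (simp add: power_mult_distrib nat_diff_distrib' nat_add_distrib flip: power_mult)

lemma norm_sph_harm_square:
  assumes "\<bar>m\<bar> \<le> int l"
  shows "(cmod (sph_harm l m \<theta> \<phi>))\<^sup>2 = (sh_const l \<bar>m\<bar>)\<^sup>2 *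
           poly (one_minus_xsq ^ nat \<bar>m\<bar> * ((pderiv ^^ nat \<bar>m\<bar>) (legendre_poly l))\<^sup>2) (cos \<theta>)"
proof -
  define n where "n = nat \<bar>m\<bar>"
  have "n \<le> l"
    using assms unfolding n_def by simp
  then have fact_pos: "(fact (l - n) :: real) > 0" "(fact (l + n) :: real) > 0"
    by simp_all
  have "0 \<le> 1 - (cos \<theta>)\<^sup>2"
    by (simp add: abs_square_le_1)
  then have "(sqrt (1 - (cos \<theta>)\<^sup>2) ^ n)\<^sup>2 = (1 - (cos \<theta>)\<^sup>2) ^ n"
    by (simp add: power2_eq_square flip: power_mult_distrib)
  then have assoc_sq: "(sqrt (1 - (cos \<theta>)\<^sup>2) ^ n * poly ((pderiv ^^ n) (legendre_poly l)) (cos \<theta>))\<^sup>2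
      = poly (one_minus_xsq ^ n * ((pderiv ^^ n) (legendre_poly l))\<^sup>2) (cos \<theta>)"
    by (simp add: power_mult_distrib)
  have "(cmod (sph_harm l m \<theta> \<phi>))\<^sup>2 = (sh_const l m)\<^sup>2 * (assoc_legendre l m (cos \<theta>))\<^sup>2"
    unfolding sph_harm_def by (simp add: norm_mult power_mult_distrib)
  also have "\<dots> = (sh_const l \<bar>m\<bar>)\<^sup>2 *
      (sqrt (1 - (cos \<theta>)\<^sup>2) ^ n * poly ((pderiv ^^ n) (legendre_poly l)) (cos \<theta>))\<^sup>2"
  proof (cases "0 \<le> m")
    case True
    then show ?thesis
      unfolding assoc_legendre_def n_def Let_def by simp
  next
    case False
    define q where "q = sqrt (1 - (cos \<theta>)\<^sup>2) ^ n * poly ((pderiv ^^ n) (legendre_poly l)) (cos \<theta>)"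
    have "nat (int l - m) = l + n" "nat (int l + m) = l - n"
      using False \<open>n \<le> l\<close> unfolding n_def by auto
    then have sh: "(sh_const l m)\<^sup>2 = (2 * real l + 1) * fact (l + n) / (4 * pi * fact (l - n))"
      unfolding sh_const_def using fact_pos by (simp add: power_mult_distrib flip: power_mult)
    have assoc: "(assoc_legendre l m (cos \<theta>))\<^sup>2 = (fact (l - n) / fact (l + n))\<^sup>2 * q\<^sup>2"
      using False unfolding assoc_legendre_def n_def[symmetric] Let_def q_def
      by (simp add: power_mult_distrib power_divide flip: power_mult)
    txt \<open>The factor \<open>(l - n)! / (l + n)!\<close> in \<open>P\<^sub>l\<^sup>-\<^sup>n\<close> compensates the change of \<open>sh_const\<close>.\<close>
    have "A \<noteq> 0 \<Longrightarrow> B \<noteq> 0 \<Longrightarrow>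
        (2 * real l + 1) * B / (4 * pi * A) * ((A / B)\<^sup>2 * P) = (2 * real l + 1) * A / (4 * pi * B) * P"
      for A B P :: real
      by (simp add: field_simps power2_eq_square)
    then show ?thesis
      using fact_pos unfolding sh assoc q_def[symmetric] sh_const_abs_square n_def[symmetric] by simp
  qed
  finally show ?thesis
    using assoc_sq unfolding n_def by simp
qed

text \<open>Uncurried, so that the measurability prover sees a single function of the point.\<close>

definition sph_harm_at :: "nat \<Rightarrow> int \<Rightarrow> real \<times> real \<Rightarrow> complex" where
  "sph_harm_at l m p = sph_harm l m (fst p) (snd p)"

lemma continuous_on_assoc_legendre: "continuous_on UNIV (assoc_legendre l m)"
  unfolding assoc_legendre_def[abs_def] Let_def
  by (cases "0 \<le> m") (auto intro!: continuous_intros continuous_on_poly)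

lemma borel_measurable_sph_harm_at [measurable]:
  "sph_harm_at l m \<in> borel_measurable (lborel \<Otimes>\<^sub>M lborel)"
proof -
  have "continuous_on UNIV (sph_harm_at l m)"
    unfolding sph_harm_at_def[abs_def] sph_harm_def
    by (intro continuous_intros continuous_on_compose2[OF continuous_on_assoc_legendre]
        continuous_on_of_real) auto
  then show ?thesis
    unfolding lborel_prod using measurable_cong_sets[OF sets_lborel refl]
    by (blast intro: borel_measurable_continuous_onI)
qed

definition sphere_weight :: "real \<times> real \<Rightarrow> real" where
  "sphere_weight p = indicator ({0..<pi} \<times> {0..<2 * pi}) p * sin (fst p)"

lemma sphere_weight_nonneg: "0 \<le> sphere_weight p"
  unfolding sphere_weight_def by (auto simp: indicator_def intro!: sin_ge_zero)

lemma borel_measurable_sphere_weight [measurable]: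
  "sphere_weight \<in> borel_measurable (lborel \<Otimes>\<^sub>M lborel)"
  unfolding sphere_weight_def[abs_def] indicator_times by measurable

lemma nn_integral_sphere_weight_zonal:
  fixes f :: "real \<Rightarrow> real"
  assumes [measurable]: "f \<in> borel_measurable lborel" and f_nonneg: "\<And>\<theta>. 0 \<le> f \<theta>"
    and f_integral: "((\<lambda>\<theta>. f \<theta> * sin \<theta>) has_integral I) {0..pi}"
  shows "(\<integral>\<^sup>+p. ennreal (sphere_weight p * f (fst p)) \<partial>(lborel \<Otimes>\<^sub>M lborel)) = ennreal (2 * pi * I)"
proof -
  define g where "g p = ennreal (indicator {0..<pi} (fst p) * indicator {0..<2*pi} (snd p) * sin (fst p) * f (fst p))"
    for p :: "real \<times> real"
  have g_meas: "g \<in> borel_measurable (lborel \<Otimes>\<^sub>M lborel)"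
    unfolding g_def by measurable
  have "(\<integral>\<^sup>+p. ennreal (sphere_weight p * f (fst p)) \<partial>(lborel \<Otimes>\<^sub>M lborel)) = (\<integral>\<^sup>+p. g p \<partial>(lborel \<Otimes>\<^sub>M lborel))"
    unfolding g_def sphere_weight_def indicator_times by (simp add: mult.commute mult.left_commute)
  also have "\<dots> = (\<integral>\<^sup>+\<theta>. \<integral>\<^sup>+\<phi>. g (\<theta>, \<phi>) \<partial>lborel \<partial>lborel)"
    by (rule lborel.nn_integral_fst[OF g_meas, symmetric])
  also have "\<dots> = (\<integral>\<^sup>+\<theta>. ennreal (indicator {0..pi} \<theta> * (2 * pi * (f \<theta> * sin \<theta>))) \<partial>lborel)"
  proof (rule nn_integral_cong)
    fix \<theta> :: real
    define c where "c = indicator {0..<pi} \<theta> * sin \<theta> * f \<theta>"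
    have "0 \<le> c"
      unfolding c_def using f_nonneg[of \<theta>] by (auto simp: indicator_def intro!: mult_nonneg_nonneg sin_ge_zero)
    have "(\<integral>\<^sup>+\<phi>. g (\<theta>, \<phi>) \<partial>lborel) = (\<integral>\<^sup>+\<phi>. ennreal c * indicator {0..<2*pi} \<phi> \<partial>lborel)"
      unfolding g_def c_def by (intro nn_integral_cong) (auto simp: indicator_def)
    also have "\<dots> = ennreal (2 * pi * c)"
      using \<open>0 \<le> c\<close> by (simp add: nn_integral_cmult_indicator ennreal_mult[symmetric] mult.commute)
    also have "2 * pi * c = indicator {0..pi} \<theta> * (2 * pi * (f \<theta> * sin \<theta>))"
      unfolding c_def by (auto simp: indicator_def)
    finally show "(\<integral>\<^sup>+\<phi>. g (\<theta>, \<phi>) \<partial>lborel) = \<dots>" .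
  qed
  also have "\<dots> = ennreal (2 * pi * I)"
    using f_nonneg by (intro nn_integral_has_integral_lebesgue has_integral_mult_right f_integral)
       (auto intro!: mult_nonneg_nonneg sin_ge_zero)
  finally show ?thesis .
qed

lemma nn_integral_sphere_weight_norm_sph_harm_square:
  assumes "\<bar>m\<bar> \<le> int l"
  shows "(\<integral>\<^sup>+p. ennreal (sphere_weight p * (cmod (sph_harm_at l m p))\<^sup>2) \<partial>(lborel \<Otimes>\<^sub>M lborel)) = 1"
proof -
  define n where "n = nat \<bar>m\<bar>"
  define P where "P = one_minus_xsq ^ n * ((pderiv ^^ n) (legendre_poly l))\<^sup>2"
  define h where "h \<theta> = (sh_const l \<bar>m\<bar>)\<^sup>2 * poly P (cos \<theta>)" for \<theta>
  have h_eq: "(cmod (sph_harm_at l m p))\<^sup>2 = h (fst p)" for p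
    unfolding h_def P_def n_def sph_harm_at_def using norm_sph_harm_square[OF assms] .
  have "h \<in> borel_measurable lborel"
    unfolding h_def measurable_lborel2
    by (intro borel_measurable_continuous_onI continuous_intros continuous_on_poly)
  moreover have "0 \<le> h \<theta>" for \<theta>
    using h_eq[of "(\<theta>, 0)", symmetric] by simp
  moreover have "((\<lambda>\<theta>. h \<theta> * sin \<theta>) has_integral (sh_const l \<bar>m\<bar>)\<^sup>2 * poly_integral P) {0..pi}"
    unfolding h_def mult.assoc by (intro has_integral_mult_right has_integral_poly_cos_sin)
  ultimately have "(\<integral>\<^sup>+p. ennreal (sphere_weight p * (cmod (sph_harm_at l m p))\<^sup>2) \<partial>(lborel \<Otimes>\<^sub>M lborel))
      = ennreal (2 * pi * ((sh_const l \<bar>m\<bar>)\<^sup>2 * poly_integral P))"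
    unfolding h_eq by (rule nn_integral_sphere_weight_zonal)
  also have "2 * pi * ((sh_const l \<bar>m\<bar>)\<^sup>2 * poly_integral P) = 1"
  proof -
    have "u \<noteq> 0 \<Longrightarrow> v \<noteq> 0 \<Longrightarrow> 2 * pi * (u / (4 * pi * v) * (2 * v / u)) = 1" for u v :: real
      by (simp add: field_simps)
    moreover have "n \<le> l"
      using assms unfolding n_def by simp
    ultimately show ?thesis
      unfolding P_def sh_const_abs_square n_def[symmetric]
      by (simp add: poly_integral_legendre_poly_square)
  qed
  finally show ?thesis
    by simp
qed

lemma nn_integral_sphere_weight_le: "(\<integral>\<^sup>+p. ennreal (sphere_weight p) \<partial>(lborel \<Otimes>\<^sub>M lborel)) \<le> ennreal (2 * pi\<^sup>2)"
proof -
  have "(\<integral>\<^sup>+p. ennreal (sphere_weight p) \<partial>(lborel \<Otimes>\<^sub>M lborel))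
      \<le> (\<integral>\<^sup>+p. indicator ({0..<pi} \<times> {0..<2 * pi}) p \<partial>(lborel \<Otimes>\<^sub>M lborel))"
    by (intro nn_integral_mono) (auto simp: sphere_weight_def indicator_def intro: sin_le_one)
  also have "\<dots> = emeasure lborel {0..<pi} * emeasure lborel {0..<2 * pi}"
    by (simp add: lborel.emeasure_pair_measure_Times)
  also have "\<dots> = ennreal (2 * pi\<^sup>2)"
    by (simp add: ennreal_mult[symmetric] power2_eq_square)
  finally show ?thesis .
qed

lemma sph_harm_0_pole: "sph_harm l 0 0 0 = sqrt ((2 * real l + 1) / (4 * pi))"
  by (simp add: sph_harm_def sh_const_def assoc_legendre_def poly_legendre_poly_1)

section \<open>Damped mode amplitudes\<close>

lemma has_real_derivative_shc: "((\<lambda>t. shc t K) has_real_derivative cosh (t * K)) (at t)"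
  unfolding shc_def
  by (cases "K = 0") (auto intro!: derivative_eq_intros simp: field_simps)

lemma shc_nonneg: "0 \<le> t \<Longrightarrow> 0 \<le> K \<Longrightarrow> 0 \<le> shc t K"
  unfolding shc_def by (auto intro!: divide_nonneg_pos simp: sinh_real_nonneg_iff)

lemma sinh_le_mult_exp: "0 \<le> y \<Longrightarrow> sinh y \<le> y * exp (y :: real)"
proof -
  assume "0 \<le> y"
  have "exp y * (1 - 2 * y) \<le> exp y * exp (- 2 * y)"
    using exp_ge_add_one_self[of "- 2 * y"] by (intro mult_left_mono) auto
  also have "\<dots> = exp (- y)"
    by (simp flip: exp_add)
  finally show ?thesis
    unfolding sinh_def by (simp add: algebra_simps)
qed

lemma shc_le: "0 \<le> t \<Longrightarrow> 0 \<le> K \<Longrightarrow> shc t K \<le> t * exp (t * K)"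
  using sinh_le_mult_exp[of "t * K"] unfolding shc_def
  by (cases "K = 0") (auto simp: divide_simps algebra_simps)

lemma mult_exp_minus_le_1: "0 \<le> x \<Longrightarrow> x * exp (- x) \<le> (1 :: real)"
proof -
  have "x \<le> exp x"
    using exp_ge_add_one_self[of x] by linarith
  then show ?thesis
    by (simp add: exp_minus field_simps)
qed

lemma has_real_derivative_overdamped:
  "((\<lambda>t. exp (- (\<alpha> * t)) * (cosh (t * K) + \<alpha> * shc t K)) has_real_derivative
     exp (- (\<alpha> * s)) * (K\<^sup>2 - \<alpha>\<^sup>2) * shc s K) (at s)"
proof -
  have "sinh (s * K) * K = K\<^sup>2 * shc s K"
    unfolding shc_def by (simp add: power2_eq_square)
  then show ?thesis
    by (auto intro!: derivative_eq_intros has_real_derivative_shc simp: algebra_simps power2_eq_square)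
qed

lemma overdamped_derivative_bound:
  assumes "0 \<le> K" "K \<le> \<alpha>" "0 \<le> s"
  shows "\<bar>exp (- (\<alpha> * s)) * (K\<^sup>2 - \<alpha>\<^sup>2) * shc s K\<bar> \<le> \<alpha> + K"
proof -
  have "\<bar>K\<^sup>2 - \<alpha>\<^sup>2\<bar> = (\<alpha> - K) * (\<alpha> + K)"
    using assms power_mono[of K \<alpha> 2] by (simp add: power2_eq_square algebra_simps)
  then have "\<bar>exp (- (\<alpha> * s)) * (K\<^sup>2 - \<alpha>\<^sup>2) * shc s K\<bar> = exp (- (\<alpha> * s)) * ((\<alpha> - K) * (\<alpha> + K)) * shc s K"
    using assms shc_nonneg[of s K] by (simp add: abs_mult)
  also have "\<dots> \<le> exp (- (\<alpha> * s)) * ((\<alpha> - K) * (\<alpha> + K)) * (s * exp (s * K))"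
    using assms by (intro mult_left_mono shc_le) auto
  also have "\<dots> = (\<alpha> + K) * (((\<alpha> - K) * s) * exp (- ((\<alpha> - K) * s)))"
    by (simp add: algebra_simps flip: exp_add)
  also have "\<dots> \<le> \<alpha> + K"
    using assms mult_left_mono[OF mult_exp_minus_le_1[of "(\<alpha> - K) * s"], of "\<alpha> + K"] by simp
  finally show ?thesis .
qed

lemma has_real_derivative_underdamped:
  fixes \<alpha> K s :: real
  assumes "K \<noteq> 0"
  shows "((\<lambda>t. exp (- (\<alpha> * t)) * (cos (t * K) + \<alpha> / K * sin (t * K))) has_real_derivative
     - exp (- (\<alpha> * s)) * (\<alpha>\<^sup>2 + K\<^sup>2) * (sin (s * K) / K)) (at s)"
  using assms
  by (auto intro!: derivative_eq_intros simp: field_simps power2_eq_square)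

lemma underdamped_derivative_bound:
  fixes \<alpha> K s :: real
  assumes "0 < K" "0 \<le> \<alpha>" "0 \<le> s"
  shows "\<bar>- exp (- (\<alpha> * s)) * (\<alpha>\<^sup>2 + K\<^sup>2) * (sin (s * K) / K)\<bar> \<le> \<alpha> + K"
proof -
  have sin_le: "\<bar>sin (s * K) / K\<bar> \<le> s"
    using abs_sin_x_le_abs_x[of "s * K"] assms by (simp add: abs_mult divide_simps)
  have "\<bar>- exp (- (\<alpha> * s)) * (\<alpha>\<^sup>2 + K\<^sup>2) * (sin (s * K) / K)\<bar>
      = exp (- (\<alpha> * s)) * (\<alpha>\<^sup>2 + K\<^sup>2) * (\<bar>sin (s * K)\<bar> / K)"
    using assms by (simp add: abs_mult abs_divide)
  also have "\<dots> = \<alpha> * exp (- (\<alpha> * s)) * (\<alpha> * \<bar>sin (s * K) / K\<bar>) + exp (- (\<alpha> * s)) * (K * \<bar>sin (s * K)\<bar>)"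
    using assms by (simp add: abs_divide power2_eq_square field_simps)
  also have "\<dots> \<le> \<alpha> * ((\<alpha> * s) * exp (- (\<alpha> * s))) + K"
  proof (rule add_mono)
    show "\<alpha> * exp (- (\<alpha> * s)) * (\<alpha> * \<bar>sin (s * K) / K\<bar>) \<le> \<alpha> * ((\<alpha> * s) * exp (- (\<alpha> * s)))"
    proof -
      have "\<alpha> * exp (- (\<alpha> * s)) * (\<alpha> * \<bar>sin (s * K) / K\<bar>) \<le> \<alpha> * exp (- (\<alpha> * s)) * (\<alpha> * s)"
        using assms(2) by (intro mult_left_mono[OF mult_left_mono[OF sin_le]]) auto
      then show ?thesis
        by (simp add: mult_ac)
    qed
    have "K * \<bar>sin (s * K)\<bar> \<le> K"
      using assms(1) by (simp add: mult_left_le)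
    then show "exp (- (\<alpha> * s)) * (K * \<bar>sin (s * K)\<bar>) \<le> K"
      using assms by (intro mult_left_le_one_le order.trans[OF _ \<open>K * \<bar>sin (s * K)\<bar> \<le> K\<close>]) auto
  qed
  also have "\<dots> \<le> \<alpha> + K"
    using assms mult_left_mono[OF mult_exp_minus_le_1[of "\<alpha> * s"], of \<alpha>] by simp
  finally show ?thesis .
qed

definition decay_rate :: "real \<Rightarrow> real \<Rightarrow> real" where
  "decay_rate c D = c\<^sup>2 / (2 * D)"

definition mode_amplitude :: "real \<Rightarrow> real \<Rightarrow> real \<Rightarrow> nat \<Rightarrow> real \<Rightarrow> real" where
  "mode_amplitude c D k l t = exp (- (c\<^sup>2 * t) / (2 * D)) * (Al c D k l t + Bl c D k l t)"

lemma decay_rate_square: "(decay_rate c D)\<^sup>2 = c ^ 4 / (4 * D\<^sup>2)"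
  unfolding decay_rate_def by (simp add: power_divide power_mult_distrib flip: power_mult)

context
  fixes c D k :: real
  assumes c: "0 < c" and D: "0 < D" and k: "0 < k"
begin

lemma decay_rate_pos: "0 < decay_rate c D"
  unfolding decay_rate_def using c D by simp

lemma le_lstar_iff: "real l \<le> lstar c D k \<longleftrightarrow> c\<^sup>2 * real l * (real l + 1) * k\<^sup>2 \<le> (decay_rate c D)\<^sup>2"
proof -
  have Dk: "0 < D * k"
    using D k by simp
  have "real l \<le> lstar c D k \<longleftrightarrow> D * k * (2 * real l + 1) \<le> sqrt (D\<^sup>2 * k\<^sup>2 + c\<^sup>2)"
    unfolding lstar_def using Dk by (simp add: field_simps)
  also have "\<dots> \<longleftrightarrow> (D * k * (2 * real l + 1))\<^sup>2 \<le> D\<^sup>2 * k\<^sup>2 + c\<^sup>2"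
    using Dk by (simp add: real_le_rsqrt real_sqrt_le_iff flip: real_sqrt_le_iff[of "(D * k * (2 * real l + 1))\<^sup>2"])
  also have "\<dots> \<longleftrightarrow> 4 * D\<^sup>2 * k\<^sup>2 * (real l * (real l + 1)) \<le> c\<^sup>2"
    by (simp add: power2_eq_square algebra_simps)
  also have "\<dots> \<longleftrightarrow> c\<^sup>2 * (4 * D\<^sup>2 * k\<^sup>2 * (real l * (real l + 1))) \<le> c\<^sup>2 * c\<^sup>2"
    using c by (intro mult_le_cancel_left_pos[symmetric]) simp
  also have "\<dots> \<longleftrightarrow> c\<^sup>2 * real l * (real l + 1) * k\<^sup>2 \<le> (decay_rate c D)\<^sup>2"
    using D unfolding decay_rate_square by (simp add: field_simps power4_eq_xxxx power2_eq_square)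
  finally show ?thesis .
qed

lemma mode_amplitude_overdamped:
  assumes "real l \<le> lstar c D k"
  shows "mode_amplitude c D k l = (\<lambda>t. exp (- (decay_rate c D * t)) *
           (cosh (t * Kl c D k l) + decay_rate c D * shc t (Kl c D k l)))"
    and "0 \<le> Kl c D k l" and "Kl c D k l \<le> decay_rate c D"
proof -
  have le: "c\<^sup>2 * real l * (real l + 1) * k\<^sup>2 \<le> (decay_rate c D)\<^sup>2"
    using assms le_lstar_iff by blast
  have K: "Kl c D k l = sqrt ((decay_rate c D)\<^sup>2 - c\<^sup>2 * real l * (real l + 1) * k\<^sup>2)"
    unfolding Kl_def decay_rate_square ..
  show "mode_amplitude c D k l = (\<lambda>t. exp (- (decay_rate c D * t)) *
           (cosh (t * Kl c D k l) + decay_rate c D * shc t (Kl c D k l)))"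
    using assms by (auto simp: mode_amplitude_def Al_def Bl_def decay_rate_def)
  show "0 \<le> Kl c D k l"
    using le unfolding K by simp
  have "Kl c D k l \<le> sqrt ((decay_rate c D)\<^sup>2)"
    unfolding K by (intro real_sqrt_le_mono) simp
  then show "Kl c D k l \<le> decay_rate c D"
    using decay_rate_pos by simp
qed

lemma mode_amplitude_underdamped:
  assumes "\<not> real l \<le> lstar c D k"
  shows "mode_amplitude c D k l = (\<lambda>t. exp (- (decay_rate c D * t)) *
           (cos (t * Kl' c D k l) + decay_rate c D / Kl' c D k l * sin (t * Kl' c D k l)))"
    and "0 < Kl' c D k l" and "Kl' c D k l \<le> c * k * (real l + 1)"
proof -
  have gt: "(decay_rate c D)\<^sup>2 < c\<^sup>2 * real l * (real l + 1) * k\<^sup>2"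
    using assms le_lstar_iff by (simp add: not_le)
  have K: "Kl' c D k l = sqrt (c\<^sup>2 * real l * (real l + 1) * k\<^sup>2 - (decay_rate c D)\<^sup>2)"
    unfolding Kl'_def decay_rate_square ..
  show "mode_amplitude c D k l = (\<lambda>t. exp (- (decay_rate c D * t)) *
           (cos (t * Kl' c D k l) + decay_rate c D / Kl' c D k l * sin (t * Kl' c D k l)))"
    using assms by (auto simp: mode_amplitude_def Al_def Bl_def decay_rate_def)
  show "0 < Kl' c D k l"
    using gt unfolding K by simp
  have "c\<^sup>2 * real l * (real l + 1) * k\<^sup>2 - (decay_rate c D)\<^sup>2 \<le> (c * k * (real l + 1))\<^sup>2"
    using c k by (simp add: power2_eq_square algebra_simps mult_left_mono)
  then have "Kl' c D k l \<le> sqrt ((c * k * (real l + 1))\<^sup>2)"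
    unfolding K by (simp only: real_sqrt_le_iff)
  then show "Kl' c D k l \<le> c * k * (real l + 1)"
    using c k by simp
qed

lemma decay_rate_plus_le:
  assumes "K \<le> decay_rate c D + c * k * (real l + 1)"
  shows "decay_rate c D + K \<le> (2 * decay_rate c D + c * k) * (real l + 1)"
proof -
  have "decay_rate c D \<le> decay_rate c D * (2 * real l + 1)"
    using decay_rate_pos by simp
  then have "decay_rate c D + K \<le> decay_rate c D * (2 * real l + 1) + (decay_rate c D + c * k * (real l + 1))"
    using assms by (rule add_mono)
  also have "\<dots> = (2 * decay_rate c D + c * k) * (real l + 1)"
    by (simp add: algebra_simps)
  finally show ?thesis .
qed

lemma mode_amplitude_derivative_bound:
  obtains g' where "\<And>s. (mode_amplitude c D k l has_real_derivative g' s) (at s)"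
    and "\<And>s. 0 \<le> s \<Longrightarrow> \<bar>g' s\<bar> \<le> (2 * decay_rate c D + c * k) * (real l + 1)"
proof (cases "real l \<le> lstar c D k")
  case True
  define K where "K = Kl c D k l"
  note props = mode_amplitude_overdamped[OF True, folded K_def]
  have bound: "decay_rate c D + K \<le> (2 * decay_rate c D + c * k) * (real l + 1)"
    using props(3) c k decay_rate_pos by (intro decay_rate_plus_le add_increasing2 add_increasing) auto
  show ?thesis
  proof (rule that[of "\<lambda>s. exp (- (decay_rate c D * s)) * (K\<^sup>2 - (decay_rate c D)\<^sup>2) * shc s K"])
    show "(mode_amplitude c D k l has_real_derivative
        exp (- (decay_rate c D * s)) * (K\<^sup>2 - (decay_rate c D)\<^sup>2) * shc s K) (at s)" for s
      unfolding props(1) by (rule has_real_derivative_overdamped)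
    show "\<bar>exp (- (decay_rate c D * s)) * (K\<^sup>2 - (decay_rate c D)\<^sup>2) * shc s K\<bar>
        \<le> (2 * decay_rate c D + c * k) * (real l + 1)" if "0 \<le> s" for s
      using overdamped_derivative_bound[OF props(2,3) that] bound by linarith
  qed
next
  case False
  define K where "K = Kl' c D k l"
  note props = mode_amplitude_underdamped[OF False, folded K_def]
  have bound: "decay_rate c D + K \<le> (2 * decay_rate c D + c * k) * (real l + 1)"
    using props(3) decay_rate_pos by (intro decay_rate_plus_le add_increasing) auto
  show ?thesis
  proof (rule that[of "\<lambda>s. - exp (- (decay_rate c D * s)) * ((decay_rate c D)\<^sup>2 + K\<^sup>2) * (sin (s * K) / K)"])
    show "(mode_amplitude c D k l has_real_derivative
        - exp (- (decay_rate c D * s)) * ((decay_rate c D)\<^sup>2 + K\<^sup>2) * (sin (s * K) / K)) (at s)" for s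
      unfolding props(1) using props(2) by (intro has_real_derivative_underdamped) simp
    show "\<bar>- exp (- (decay_rate c D * s)) * ((decay_rate c D)\<^sup>2 + K\<^sup>2) * (sin (s * K) / K)\<bar>
        \<le> (2 * decay_rate c D + c * k) * (real l + 1)" if "0 \<le> s" for s
      using underdamped_derivative_bound[OF props(2) less_imp_le[OF decay_rate_pos] that] bound
      by linarith
  qed
qed

lemma mode_amplitude_lipschitz:
  assumes "0 \<le> t" "0 \<le> h"
  shows "\<bar>mode_amplitude c D k l (t + h) - mode_amplitude c D k l t\<bar>
           \<le> h * ((2 * decay_rate c D + c * k) * (real l + 1))"
proof -
  obtain g' where "\<And>s. (mode_amplitude c D k l has_real_derivative g' s) (at s)"
    and "\<And>s. 0 \<le> s \<Longrightarrow> \<bar>g' s\<bar> \<le> (2 * decay_rate c D + c * k) * (real l + 1)"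
    using mode_amplitude_derivative_bound[of l] by blast
  then have "norm (mode_amplitude c D k l (t + h) - mode_amplitude c D k l t)
      \<le> (2 * decay_rate c D + c * k) * (real l + 1) * norm (t + h - t)"
    using assms by (intro field_differentiable_bound[of "{0..}"])
       (auto intro: has_field_derivative_at_within)
  then show ?thesis
    using assms by (simp add: mult.commute)
qed

lemma Al_plus_Bl_underdamped_bound:
  assumes "\<not> real l \<le> lstar c D k" "0 \<le> t"
  shows "\<bar>Al c D k l t + Bl c D k l t\<bar> \<le> 1 + decay_rate c D * t"
proof -
  define K where "K = Kl' c D k l"
  have "0 < K"
    using mode_amplitude_underdamped(2)[OF assms(1)] unfolding K_def .
  have "\<bar>sin (t * K) / K\<bar> \<le> t"
    using abs_sin_x_le_abs_x[of "t * K"] \<open>0 < K\<close> assms(2) by (simp add: abs_mult divide_simps)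
  then have "\<bar>cos (t * K) + decay_rate c D * (sin (t * K) / K)\<bar> \<le> 1 + decay_rate c D * t"
  proof -
    have "\<bar>decay_rate c D * (sin (t * K) / K)\<bar> \<le> decay_rate c D * t"
      using decay_rate_pos mult_left_mono[OF \<open>\<bar>sin (t * K) / K\<bar> \<le> t\<close>, of "decay_rate c D"]
      by (simp add: abs_mult)
    then show ?thesis
      using abs_triangle_ineq[of "cos (t * K)" "decay_rate c D * (sin (t * K) / K)"] abs_cos_le_one[of "t * K"]
      by linarith
  qed
  then show ?thesis
    using assms(1) by (simp add: Al_def Bl_def K_def decay_rate_def)
qed

end

section \<open>Coefficients of an isotropic Gaussian field\<close>

lemma (in prob_space) centred_normal_moments:
  assumes "0 < s" and X: "distributed M lborel X (normal_density 0 s)"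
  shows "integrable M X" "integrable M (\<lambda>\<omega>. (X \<omega>)\<^sup>2)"
    and "expectation X = 0" "expectation (\<lambda>\<omega>. (X \<omega>)\<^sup>2) = s\<^sup>2"
proof -
  show "expectation X = 0"
    using normal_distributed_expectation[OF assms] .
  then show "expectation (\<lambda>\<omega>. (X \<omega>)\<^sup>2) = s\<^sup>2"
    using normal_distributed_variance[OF assms] by simp
  show "integrable M X"
    using integrable_normal_moment[OF \<open>0 < s\<close>, of 0 1] distributed_integrable[OF X, of "\<lambda>x. x"] by simp
  show "integrable M (\<lambda>\<omega>. (X \<omega>)\<^sup>2)"
    using integrable_normal_moment[OF \<open>0 < s\<close>, of 0 2] distributed_integrable[OF X, of "\<lambda>x. x\<^sup>2"] by simp
qed

lemma (in prob_space) AE_zero_moments: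
  fixes X :: "'a \<Rightarrow> real"
  assumes "X \<in> borel_measurable M" "AE \<omega> in M. X \<omega> = 0"
  shows "integrable M X" "integrable M (\<lambda>\<omega>. (X \<omega>)\<^sup>2)"
    and "expectation X = 0" "expectation (\<lambda>\<omega>. (X \<omega>)\<^sup>2) = 0"
  using assms integrable_cong_AE[of X M "\<lambda>_. 0"] integrable_cong_AE[of "\<lambda>\<omega>. (X \<omega>)\<^sup>2" M "\<lambda>_. 0"]
    integral_cong_AE[of X M "\<lambda>_. 0"] integral_cong_AE[of "\<lambda>\<omega>. (X \<omega>)\<^sup>2" M "\<lambda>_. 0"]
  by auto

locale isotropic_coeffs =
  fixes M :: "'a measure" and C :: "nat \<Rightarrow> real" and a :: "nat \<Rightarrow> int \<Rightarrow> 'a \<Rightarrow> complex"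
  assumes gaussian: "gaussian_isotropic_coeffs M C a"
begin

sublocale prob_space M
  using gaussian unfolding gaussian_isotropic_coeffs_def by blast

lemma spectrum_nonneg: "0 \<le> C l"
  using gaussian unfolding gaussian_isotropic_coeffs_def by blast

lemma borel_measurable_coeff [measurable]: "a l m \<in> borel_measurable M"
  using gaussian unfolding gaussian_isotropic_coeffs_def by blast

lemma coeff_uminus:
  "\<bar>m\<bar> \<le> int l \<Longrightarrow> \<omega> \<in> space M \<Longrightarrow> a l (- m) \<omega> = (-1) ^ nat \<bar>m\<bar> * cnj (a l m \<omega>)"
  using gaussian unfolding gaussian_isotropic_coeffs_def by blast

lemma Im_coeff_0: "\<omega> \<in> space M \<Longrightarrow> Im (a l 0 \<omega>) = 0"
proof -
  assume "\<omega> \<in> space M"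
  then have "a l 0 \<omega> = cnj (a l 0 \<omega>)"
    using coeff_uminus[of 0 l \<omega>] by simp
  then show ?thesis
    by (metis cnj.simps(2) neg_equal_zero)
qed

definition coeff_part :: "nat \<times> int \<times> bool \<Rightarrow> 'a \<Rightarrow> real" where
  "coeff_part = (\<lambda>(l, m, re) \<omega>. if re then Re (a l m \<omega>) else Im (a l m \<omega>))"

definition coeff_part_variance :: "nat \<times> int \<times> bool \<Rightarrow> real" where
  "coeff_part_variance = (\<lambda>(l, m, re). if m = 0 then (if re then C l else 0) else C l / 2)"

lemma borel_measurable_coeff_part [measurable]: "coeff_part i \<in> borel_measurable M"
  unfolding coeff_part_def by (cases i) auto

lemma indep_coeff_parts:
  "indep_vars (\<lambda>_. borel) coeff_part {(l, m, re). 0 \<le> m \<and> m \<le> int l \<and> (m = 0 \<longrightarrow> re)}"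
  using gaussian unfolding gaussian_isotropic_coeffs_def coeff_part_def by blast

lemma AE_coeff_part_eq_0:
  assumes "(m = 0 \<and> \<not> re) \<or> C l = 0"
  shows "AE \<omega> in M. coeff_part (l, m, re) \<omega> = 0"
proof (cases "C l = 0")
  case True
  then have "AE \<omega> in M. a l m \<omega> = 0"
    using gaussian unfolding gaussian_isotropic_coeffs_def by blast
  then show ?thesis
    by (rule eventually_mono) (simp add: coeff_part_def)
next
  case False
  then show ?thesis
    using assms by (intro AE_I2) (simp add: coeff_part_def Im_coeff_0)
qed

lemma distributed_coeff_part:
  assumes "0 \<le> m" "m \<le> int l" "0 < C l" "m = 0 \<longrightarrow> re"
  shows "distributed M lborel (coeff_part (l, m, re)) (normal_density 0 (sqrt (coeff_part_variance (l, m, re))))"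
proof (cases "m = 0")
  case True
  then show ?thesis
    using assms gaussian unfolding gaussian_isotropic_coeffs_def coeff_part_def coeff_part_variance_def
    by auto
next
  case False
  then have "1 \<le> m"
    using assms by simp
  then show ?thesis
    using assms gaussian unfolding gaussian_isotropic_coeffs_def coeff_part_def coeff_part_variance_def
    by (cases re) auto
qed

lemma coeff_part_moments:
  assumes "0 \<le> m" "m \<le> int l"
  shows "integrable M (coeff_part (l, m, re)) \<and> integrable M (\<lambda>\<omega>. (coeff_part (l, m, re) \<omega>)\<^sup>2)
    \<and> expectation (coeff_part (l, m, re)) = 0
    \<and> expectation (\<lambda>\<omega>. (coeff_part (l, m, re) \<omega>)\<^sup>2) = coeff_part_variance (l, m, re)"
proof (cases "(m = 0 \<and> \<not> re) \<or> C l = 0")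
  case True
  then show ?thesis
    using AE_zero_moments[OF _ AE_coeff_part_eq_0] by (auto simp: coeff_part_variance_def)
next
  case False
  then have "0 < C l"
    using spectrum_nonneg[of l] by simp
  then have "0 < coeff_part_variance (l, m, re)"
    using False by (simp add: coeff_part_variance_def)
  then show ?thesis
    using centred_normal_moments[OF _ distributed_coeff_part] assms False \<open>0 < C l\<close> by simp
qed

lemma coeff_part_product:
  assumes i: "i \<in> {(l, m, re). 0 \<le> m \<and> m \<le> int l}" and j: "j \<in> {(l, m, re). 0 \<le> m \<and> m \<le> int l}"
  shows "integrable M (\<lambda>\<omega>. coeff_part i \<omega> * coeff_part j \<omega>)
    \<and> expectation (\<lambda>\<omega>. coeff_part i \<omega> * coeff_part j \<omega>) = (if i = j then coeff_part_variance i else 0)"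
proof -
  note mom_i = coeff_part_moments[of "fst (snd i)" "fst i" "snd (snd i)"]
  note mom_j = coeff_part_moments[of "fst (snd j)" "fst j" "snd (snd j)"]
  show ?thesis
  proof (cases "i = j")
    case True
    then show ?thesis
      using i mom_i by (auto simp: power2_eq_square)
  next
    case False
    let ?J = "{(l, m, re). 0 \<le> m \<and> m \<le> int l \<and> (m = 0 \<longrightarrow> re)}"
    show ?thesis
    proof (cases "i \<in> ?J \<and> j \<in> ?J")
      case True
      then have indep: "indep_vars (\<lambda>_. borel) coeff_part {i, j}"
        by (intro indep_vars_subset[OF indep_coeff_parts]) auto
      have int: "integrable M (coeff_part x)" if "x \<in> {i, j}" for x
        using that i j mom_i mom_j by auto
      have "integrable M (\<lambda>\<omega>. \<Prod>x\<in>{i, j}. coeff_part x \<omega>)"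
        "expectation (\<lambda>\<omega>. \<Prod>x\<in>{i, j}. coeff_part x \<omega>) = (\<Prod>x\<in>{i, j}. expectation (coeff_part x))"
        using indep_vars_integrable[OF _ indep int] indep_vars_lebesgue_integral[OF _ indep int] by auto
      then show ?thesis
        using False i mom_i by auto
    next
      case False
      then have "(\<exists>l. i = (l, 0, False)) \<or> (\<exists>l. j = (l, 0, False))"
        using i j by auto
      then have "\<omega> \<in> space M \<Longrightarrow> coeff_part i \<omega> * coeff_part j \<omega> = 0" for \<omega>
        unfolding coeff_part_def using Im_coeff_0 by auto
      then show ?thesis
        using \<open>i \<noteq> j\<close> Bochner_Integration.integrable_cong[of M M "\<lambda>\<omega>. coeff_part i \<omega> * coeff_part j \<omega>" "\<lambda>_. 0"]
          Bochner_Integration.integral_cong[of M M "\<lambda>\<omega>. coeff_part i \<omega> * coeff_part j \<omega>" "\<lambda>_. 0"]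
        by simp
    qed
  qed
qed

definition coeff_sign :: "int \<Rightarrow> real" where
  "coeff_sign m = (if 0 \<le> m then 1 else (-1) ^ nat \<bar>m\<bar>)"

definition conj_sign :: "int \<Rightarrow> real" where
  "conj_sign m = (if 0 \<le> m then 1 else -1)"

lemma coeff_eq_coeff_parts:
  assumes "\<bar>m\<bar> \<le> int l" "\<omega> \<in> space M"
  shows "a l m \<omega> = coeff_sign m * (coeff_part (l, \<bar>m\<bar>, True) \<omega> + \<i> * conj_sign m * coeff_part (l, \<bar>m\<bar>, False) \<omega>)"
proof (cases "0 \<le> m")
  case True
  then show ?thesis
    unfolding coeff_sign_def conj_sign_def coeff_part_def by (simp add: complex_eq_iff)
next
  case False
  then have "a l m \<omega> = (-1) ^ nat \<bar>m\<bar> * cnj (a l \<bar>m\<bar> \<omega>)"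
    using coeff_uminus[of "\<bar>m\<bar>" l \<omega>] assms by simp
  then show ?thesis
    using False unfolding coeff_sign_def conj_sign_def coeff_part_def by (simp add: complex_eq_iff)
qed

lemma signed_variance_combination:
  "coeff_sign m * coeff_sign m' *
     ((if l = l' \<and> \<bar>m\<bar> = \<bar>m'\<bar> then coeff_part_variance (l, \<bar>m\<bar>, True) else 0)
      + conj_sign m * conj_sign m' * (if l = l' \<and> \<bar>m\<bar> = \<bar>m'\<bar> then coeff_part_variance (l, \<bar>m\<bar>, False) else 0))
   = (if l = l' \<and> m = m' then C l else 0)"
proof (cases "l = l' \<and> \<bar>m\<bar> = \<bar>m'\<bar>")
  case True
  show ?thesis
  proof (cases "m = m'")
    case True
    have "coeff_sign m * coeff_sign m = 1" "conj_sign m * conj_sign m = 1"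
      unfolding coeff_sign_def conj_sign_def by (simp_all flip: power_add add: mult_2[symmetric])
    moreover have "coeff_part_variance (l, \<bar>m\<bar>, True) + coeff_part_variance (l, \<bar>m\<bar>, False) = C l"
      by (simp add: coeff_part_variance_def)
    ultimately show ?thesis
      using \<open>l = l' \<and> \<bar>m\<bar> = \<bar>m'\<bar>\<close> True by simp
  next
    case False
    then have "m' = - m" "m \<noteq> 0"
      using \<open>l = l' \<and> \<bar>m\<bar> = \<bar>m'\<bar>\<close> by auto
    then have "conj_sign m * conj_sign m' = -1"
      "coeff_part_variance (l, \<bar>m\<bar>, True) = coeff_part_variance (l, \<bar>m\<bar>, False)"
      by (auto simp: conj_sign_def coeff_part_variance_def)
    then show ?thesis
      using \<open>l = l' \<and> \<bar>m\<bar> = \<bar>m'\<bar>\<close> False by simp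
  qed
qed auto

lemma coeff_covariance:
  assumes m: "\<bar>m\<bar> \<le> int l" and m': "\<bar>m'\<bar> \<le> int l'"
  shows "integrable M (\<lambda>\<omega>. a l m \<omega> * cnj (a l' m' \<omega>))"
    and "(\<integral>\<omega>. a l m \<omega> * cnj (a l' m' \<omega>) \<partial>M) = (if l = l' \<and> m = m' then complex_of_real (C l) else 0)"
proof -
  define R where "R = coeff_part (l, \<bar>m\<bar>, True)"
  define I where "I = coeff_part (l, \<bar>m\<bar>, False)"
  define R' where "R' = coeff_part (l', \<bar>m'\<bar>, True)"
  define I' where "I' = coeff_part (l', \<bar>m'\<bar>, False)"
  define X where "X \<omega> = coeff_sign m * coeff_sign m' * (R \<omega> * R' \<omega> + conj_sign m * conj_sign m' * (I \<omega> * I' \<omega>))" for \<omega>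
  define Y where "Y \<omega> = coeff_sign m * coeff_sign m' * (conj_sign m * (I \<omega> * R' \<omega>) - conj_sign m' * (R \<omega> * I' \<omega>))" for \<omega>
  have eq: "a l m \<omega> * cnj (a l' m' \<omega>) = X \<omega> + \<i> * Y \<omega>" if "\<omega> \<in> space M" for \<omega>
    unfolding coeff_eq_coeff_parts[OF m that] coeff_eq_coeff_parts[OF m' that] X_def Y_def R_def I_def R'_def I'_def
    by (simp add: complex_eq_iff algebra_simps)
  have idx: "(l, \<bar>m\<bar>, re) \<in> {(l, m, re). 0 \<le> m \<and> m \<le> int l}" "(l', \<bar>m'\<bar>, re) \<in> {(l, m, re). 0 \<le> m \<and> m \<le> int l}"
    for re
    using m m' by auto
  note prod = coeff_part_product[OF idx(1) idx(2)]
  have "integrable M X" "integrable M Y" "expectation Y = 0"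
    unfolding X_def Y_def R_def I_def R'_def I'_def using prod by simp_all
  moreover have "expectation X = (if l = l' \<and> m = m' then C l else 0)"
    unfolding X_def R_def I_def R'_def I'_def using prod by (simp add: signed_variance_combination)
  ultimately have "integrable M (\<lambda>\<omega>. complex_of_real (X \<omega>) + \<i> * complex_of_real (Y \<omega>))"
    "(\<integral>\<omega>. complex_of_real (X \<omega>) + \<i> * complex_of_real (Y \<omega>) \<partial>M) = (if l = l' \<and> m = m' then complex_of_real (C l) else 0)"
    by (simp_all add: integral_complex_of_real)
  then show "integrable M (\<lambda>\<omega>. a l m \<omega> * cnj (a l' m' \<omega>))"
    "(\<integral>\<omega>. a l m \<omega> * cnj (a l' m' \<omega>) \<partial>M) = (if l = l' \<and> m = m' then complex_of_real (C l) else 0)"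
    using Bochner_Integration.integrable_cong[OF refl eq, of M] Bochner_Integration.integral_cong[OF refl eq, of M]
    by simp_all
qed

lemma nn_integral_norm_sum_coeffs_square:
  assumes I: "finite I" and I_sub: "\<And>l m. (l, m) \<in> I \<Longrightarrow> \<bar>m\<bar> \<le> int l"
  shows "(\<integral>\<^sup>+\<omega>. ennreal ((cmod (\<Sum>(l, m)\<in>I. e l m * a l m \<omega>))\<^sup>2) \<partial>M)
       = ennreal (\<Sum>(l, m)\<in>I. (cmod (e l m))\<^sup>2 * C l)"
proof -
  define S where "S \<omega> = (\<Sum>(l, m)\<in>I. e l m * a l m \<omega>)" for \<omega>
  define P where "P i j \<omega> = (e (fst i) (snd i) * cnj (e (fst j) (snd j))) *
                   (a (fst i) (snd i) \<omega> * cnj (a (fst j) (snd j) \<omega>))" for i j \<omega>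
  define T where "T \<omega> = (\<Sum>i\<in>I. \<Sum>j\<in>I. P i j \<omega>)" for \<omega>
  have S_sq: "(cmod (S \<omega>))\<^sup>2 = Re (T \<omega>)" for \<omega>
  proof -
    have "S \<omega> * cnj (S \<omega>) = T \<omega>"
      unfolding S_def T_def P_def
      by (simp add: case_prod_beta sum_distrib_left sum_distrib_right algebra_simps) (rule sum.swap)
    then show ?thesis
      using arg_cong[OF complex_norm_square[of "S \<omega>"], of Re] by simp
  qed
  have P_int: "integrable M (P i j)" and P_integral: "(\<integral>\<omega>. P i j \<omega> \<partial>M)
      = (if i = j then complex_of_real ((cmod (e (fst i) (snd i)))\<^sup>2 * C (fst i)) else 0)"
    if "i \<in> I" "j \<in> I" for i j
  proof -
    note cov = coeff_covariance[of "snd i" "fst i" "snd j" "fst j"]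
    have "\<bar>snd i\<bar> \<le> int (fst i)" "\<bar>snd j\<bar> \<le> int (fst j)"
      using I_sub[of "fst i" "snd i"] I_sub[of "fst j" "snd j"] that by auto
    then show "integrable M (P i j)" "(\<integral>\<omega>. P i j \<omega> \<partial>M)
      = (if i = j then complex_of_real ((cmod (e (fst i) (snd i)))\<^sup>2 * C (fst i)) else 0)"
      using cov unfolding P_def by (auto simp: prod_eq_iff complex_norm_square[symmetric])
  qed
  have T_int: "integrable M T"
    unfolding T_def using P_int by auto
  have "(\<integral>\<omega>. T \<omega> \<partial>M) = (\<Sum>i\<in>I. complex_of_real ((cmod (e (fst i) (snd i)))\<^sup>2 * C (fst i)))"
    unfolding T_def using I P_int by (simp add: Bochner_Integration.integral_sum P_integral)
  then have "integrable M (\<lambda>\<omega>. (cmod (S \<omega>))\<^sup>2)"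
    "expectation (\<lambda>\<omega>. (cmod (S \<omega>))\<^sup>2) = (\<Sum>(l, m)\<in>I. (cmod (e l m))\<^sup>2 * C l)"
    unfolding S_sq using integrable_Re[OF T_int] integral_Re[OF T_int] by (simp_all add: case_prod_beta)
  then show ?thesis
    unfolding S_def by (subst nn_integral_eq_integral) auto
qed

end

section \<open>Mean-square increments of the solution\<close>

lemma mult_le_half_square_plus:
  fixes w y x :: real
  assumes "0 \<le> w" "0 < y"
  shows "w * x \<le> y\<^sup>2 / 2 * (w * x\<^sup>2) + w / (2 * y\<^sup>2)"
proof -
  have "0 \<le> (y * x - 1 / y)\<^sup>2"
    by simp
  then have "2 * x \<le> y\<^sup>2 * x\<^sup>2 + 1 / y\<^sup>2"
    using assms by (simp add: power2_eq_square field_simps)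
  then have "w * (2 * x) \<le> w * (y\<^sup>2 * x\<^sup>2 + 1 / y\<^sup>2)"
    using assms(1) by (rule mult_left_mono)
  then show ?thesis
    by (simp add: field_simps)
qed

lemma AE_AE_nn_integral_nn_integral_PInf:
  assumes "(\<integral>\<^sup>+\<omega>. \<integral>\<^sup>+p. Q p \<omega> \<partial>N \<partial>M) \<noteq> \<infinity>"
    and "(\<lambda>\<omega>. \<integral>\<^sup>+p. Q p \<omega> \<partial>N) \<in> borel_measurable M" and "\<And>\<omega>. (\<lambda>p. Q p \<omega>) \<in> borel_measurable N"
  shows "AE \<omega> in M. AE p in N. Q p \<omega> \<noteq> \<infinity>"
  using nn_integral_PInf_AE[OF assms(2,1)] by (rule eventually_mono) (rule nn_integral_PInf_AE[OF assms(3)])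

lemma nn_integral_nn_integral_le_liminf:
  assumes "\<And>n \<omega>. (\<lambda>p. G n p \<omega>) \<in> borel_measurable N" and "\<And>n. (\<lambda>\<omega>. \<integral>\<^sup>+p. G n p \<omega> \<partial>N) \<in> borel_measurable M"
    and "AE \<omega> in M. AE p in N. F p \<omega> \<le> liminf (\<lambda>n. G n p \<omega>)"
  shows "(\<integral>\<^sup>+\<omega>. \<integral>\<^sup>+p. F p \<omega> \<partial>N \<partial>M) \<le> liminf (\<lambda>n. \<integral>\<^sup>+\<omega>. \<integral>\<^sup>+p. G n p \<omega> \<partial>N \<partial>M)"
proof -
  have "AE \<omega> in M. (\<integral>\<^sup>+p. F p \<omega> \<partial>N) \<le> liminf (\<lambda>n. \<integral>\<^sup>+p. G n p \<omega> \<partial>N)"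
    using assms(3)
  proof (rule eventually_mono)
    fix \<omega> assume "AE p in N. F p \<omega> \<le> liminf (\<lambda>n. G n p \<omega>)"
    then have "(\<integral>\<^sup>+p. F p \<omega> \<partial>N) \<le> (\<integral>\<^sup>+p. liminf (\<lambda>n. G n p \<omega>) \<partial>N)"
      by (rule nn_integral_mono_AE)
    also have "\<dots> \<le> liminf (\<lambda>n. \<integral>\<^sup>+p. G n p \<omega> \<partial>N)"
      by (intro nn_integral_liminf assms(1))
    finally show "(\<integral>\<^sup>+p. F p \<omega> \<partial>N) \<le> liminf (\<lambda>n. \<integral>\<^sup>+p. G n p \<omega> \<partial>N)" .
  qed
  then have "(\<integral>\<^sup>+\<omega>. \<integral>\<^sup>+p. F p \<omega> \<partial>N \<partial>M) \<le> (\<integral>\<^sup>+\<omega>. liminf (\<lambda>n. \<integral>\<^sup>+p. G n p \<omega> \<partial>N) \<partial>M)"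
    by (rule nn_integral_mono_AE)
  also have "\<dots> \<le> liminf (\<lambda>n. \<integral>\<^sup>+\<omega>. \<integral>\<^sup>+p. G n p \<omega> \<partial>N \<partial>M)"
    by (intro nn_integral_liminf assms(2))
  finally show ?thesis .
qed

definition degree_component :: "(nat \<Rightarrow> int \<Rightarrow> 'a \<Rightarrow> complex) \<Rightarrow> nat \<Rightarrow> real \<times> real \<Rightarrow> 'a \<Rightarrow> complex" where
  "degree_component a l p \<omega> = (\<Sum>m\<in>{- int l..int l}. sph_harm_at l m p * a l m \<omega>)"

lemma xi_eq: "xi a c D k l m t \<omega> = complex_of_real (Al c D k l t + Bl c D k l t) * a l m \<omega>"
proof -
  have "sqrt (4 * pi / (2 * real l + 1)) * sqrt ((2 * real l + 1) / (4 * pi)) = 1"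
    by (simp flip: real_sqrt_mult)
  then have "complex_of_real (sqrt (4 * pi / (2 * real l + 1))) * cnj (sph_harm l 0 0 0) = 1"
    unfolding sph_harm_0_pole by (simp flip: of_real_mult)
  moreover have "xi a c D k l m t \<omega> = complex_of_real (sqrt (4 * pi / (2 * real l + 1))) * cnj (sph_harm l 0 0 0)
      * (complex_of_real (Al c D k l t + Bl c D k l t) * a l m \<omega>)"
    unfolding xi_def by (simp only: mult_ac)
  ultimately show ?thesis
    by simp
qed

lemma sol_eq:
  "sol a c D k \<theta> \<phi> t \<omega> = complex_of_real (exp (- (c\<^sup>2 * t) / (2 * D))) *
     (\<Sum>l. complex_of_real (Al c D k l t + Bl c D k l t) * degree_component a l (\<theta>, \<phi>) \<omega>)"
  unfolding sol_def xi_eq degree_component_def sph_harm_at_def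
  by (simp add: sum_distrib_left mult_ac)

lemma sol_sums:
  assumes "0 < c" "0 < D" "0 < k" "0 \<le> t"
    and summable: "summable (\<lambda>l. cmod (degree_component a l p \<omega>))"
  shows "(\<lambda>l. complex_of_real (mode_amplitude c D k l t) * degree_component a l p \<omega>)
           sums sol a c D k (fst p) (snd p) t \<omega>"
proof -
  obtain N :: nat where "lstar c D k < real N"
    using reals_Archimedean2 by blast
  then have "\<forall>\<^sub>F l in sequentially. \<not> real l \<le> lstar c D k"
    by (intro eventually_sequentiallyI[of N]) auto
  then have "\<forall>\<^sub>F l in sequentially. norm (complex_of_real (Al c D k l t + Bl c D k l t) * degree_component a l p \<omega>)
      \<le> (1 + decay_rate c D * t) * cmod (degree_component a l p \<omega>)"
  proof (rule eventually_mono)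
    fix l assume "\<not> real l \<le> lstar c D k"
    then have "\<bar>Al c D k l t + Bl c D k l t\<bar> \<le> 1 + decay_rate c D * t"
      by (rule Al_plus_Bl_underdamped_bound[OF assms(1-3) _ assms(4)])
    then show "norm (complex_of_real (Al c D k l t + Bl c D k l t) * degree_component a l p \<omega>)
        \<le> (1 + decay_rate c D * t) * cmod (degree_component a l p \<omega>)"
      unfolding norm_mult norm_of_real by (rule mult_right_mono) simp
  qed
  then have "summable (\<lambda>l. complex_of_real (Al c D k l t + Bl c D k l t) * degree_component a l p \<omega>)"
    using summable_mult[OF summable] by (rule summable_comparison_test_ev)
  from sums_mult[OF summable_sums[OF this], of "complex_of_real (exp (- (c\<^sup>2 * t) / (2 * D)))"]
  show ?thesis
    unfolding sol_eq[of a c D k "fst p" "snd p" t \<omega>] by (simp add: mode_amplitude_def mult.assoc)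
qed

lemma L2_sphere_norm_le:
  assumes "0 \<le> B"
    and "(\<integral>\<^sup>+\<omega>. \<integral>\<^sup>+p. ennreal (sphere_weight p * (cmod (X (fst p) (snd p) \<omega>))\<^sup>2) \<partial>(lborel \<Otimes>\<^sub>M lborel) \<partial>M)
           \<le> ennreal (B\<^sup>2)"
  shows "L2_sphere_norm M X \<le> ennreal B"
proof -
  define I where "I = (\<integral>\<^sup>+ \<omega>. (\<integral>\<^sup>+ p. indicator ({0..<pi} \<times> {0..<2 * pi}) p *
      ennreal ((cmod (X (fst p) (snd p) \<omega>))\<^sup>2 * sin (fst p)) \<partial>lborel) \<partial>M)"
  have "indicator ({0..<pi} \<times> {0..<2 * pi}) p * ennreal ((cmod (X (fst p) (snd p) \<omega>))\<^sup>2 * sin (fst p))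
      = ennreal (sphere_weight p * (cmod (X (fst p) (snd p) \<omega>))\<^sup>2)" for p \<omega>
    unfolding sphere_weight_def by (auto simp: indicator_def mult.commute)
  then have "I \<le> ennreal (B\<^sup>2)"
    using assms(2) unfolding I_def lborel_prod by simp
  then have "I \<noteq> \<infinity>" "enn2real I \<le> B\<^sup>2"
    using neq_top_trans[OF ennreal_neq_top] enn2real_mono[of _ "ennreal (B\<^sup>2)"] by auto
  then show ?thesis
    using \<open>0 \<le> B\<close> real_sqrt_le_mono[OF \<open>enn2real I \<le> B\<^sup>2\<close>]
    unfolding L2_sphere_norm_def Let_def I_def[symmetric] by (simp add: ennreal_leI)
qed

lemma sol_increment_sums:
  assumes "0 < c" "0 < D" "0 < k" "0 \<le> t" "0 \<le> h"
    and "summable (\<lambda>l. cmod (degree_component a l p \<omega>))"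
  shows "(\<lambda>l. complex_of_real (mode_amplitude c D k l (t + h) - mode_amplitude c D k l t) * degree_component a l p \<omega>)
           sums (sol a c D k (fst p) (snd p) (t + h) \<omega> - sol a c D k (fst p) (snd p) t \<omega>)"
  unfolding of_real_diff left_diff_distrib using assms by (intro sums_diff sol_sums) auto

context isotropic_coeffs
begin

lemma nn_integral_coeffs_weighted_norm_sum_degree_components:
  assumes "finite L"
  shows "(\<integral>\<^sup>+\<omega>. ennreal (sphere_weight p * (cmod (\<Sum>l\<in>L. d l * degree_component a l p \<omega>))\<^sup>2) \<partial>M)
       = ennreal (sphere_weight p * (\<Sum>(l, m)\<in>Sigma L (\<lambda>l. {- int l..int l}). (cmod (d l * sph_harm_at l m p))\<^sup>2 * C l))"
proof -
  define I where "I = Sigma L (\<lambda>l. {- int l..int l})"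
  have "finite I"
    unfolding I_def using assms by auto
  have sum_eq: "(\<Sum>l\<in>L. d l * degree_component a l p \<omega>) = (\<Sum>(l, m)\<in>I. (d l * sph_harm_at l m p) * a l m \<omega>)" for \<omega>
    unfolding degree_component_def I_def using assms
    by (simp add: sum_distrib_left sum.Sigma mult.assoc)
  have "0 \<le> (\<Sum>(l, m)\<in>I. (cmod (d l * sph_harm_at l m p))\<^sup>2 * C l)"
    using spectrum_nonneg by (auto intro!: sum_nonneg)
  then have "(\<integral>\<^sup>+\<omega>. ennreal (sphere_weight p * (cmod (\<Sum>l\<in>L. d l * degree_component a l p \<omega>))\<^sup>2) \<partial>M)
      = ennreal (sphere_weight p) * (\<integral>\<^sup>+\<omega>. ennreal ((cmod (\<Sum>(l, m)\<in>I. (d l * sph_harm_at l m p) * a l m \<omega>))\<^sup>2) \<partial>M)"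
    unfolding sum_eq using sphere_weight_nonneg
    by (subst nn_integral_cmult[symmetric]) (auto simp: ennreal_mult)
  also have "\<dots> = ennreal (sphere_weight p * (\<Sum>(l, m)\<in>I. (cmod (d l * sph_harm_at l m p))\<^sup>2 * C l))"
    using \<open>finite I\<close> \<open>0 \<le> (\<Sum>(l, m)\<in>I. _)\<close> sphere_weight_nonneg
    by (subst nn_integral_norm_sum_coeffs_square) (auto simp: I_def ennreal_mult)
  finally show ?thesis
    unfolding I_def .
qed

lemma nn_integral_weighted_norm_sum_degree_components:
  assumes "finite L"
  shows "(\<integral>\<^sup>+\<omega>. \<integral>\<^sup>+p. ennreal (sphere_weight p * (cmod (\<Sum>l\<in>L. d l * degree_component a l p \<omega>))\<^sup>2) \<partial>(lborel \<Otimes>\<^sub>M lborel) \<partial>M)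
       = ennreal (\<Sum>l\<in>L. (cmod (d l))\<^sup>2 * C l * (2 * real l + 1))"
proof -
  define I where "I = Sigma L (\<lambda>l. {- int l..int l})"
  define w where "w i = (cmod (d (fst i)))\<^sup>2 * C (fst i)" for i :: "nat \<times> int"
  have w_nonneg: "0 \<le> w i" for i
    unfolding w_def using spectrum_nonneg by simp
  interpret pair_sigma_finite "lborel \<Otimes>\<^sub>M lborel" M
    unfolding pair_sigma_finite_def
    using lborel_pair.P.sigma_finite_measure_axioms prob_space_imp_sigma_finite[OF prob_space_axioms] by blast
  have "(\<integral>\<^sup>+\<omega>. \<integral>\<^sup>+p. ennreal (sphere_weight p * (cmod (\<Sum>l\<in>L. d l * degree_component a l p \<omega>))\<^sup>2) \<partial>(lborel \<Otimes>\<^sub>M lborel) \<partial>M)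
      = (\<integral>\<^sup>+p. \<integral>\<^sup>+\<omega>. ennreal (sphere_weight p * (cmod (\<Sum>l\<in>L. d l * degree_component a l p \<omega>))\<^sup>2) \<partial>M \<partial>(lborel \<Otimes>\<^sub>M lborel))"
    by (intro Fubini') (unfold case_prod_beta' degree_component_def, measurable)
  also have "\<dots> = (\<integral>\<^sup>+p. (\<Sum>i\<in>I. ennreal (w i) *
      ennreal (sphere_weight p * (cmod (sph_harm_at (fst i) (snd i) p))\<^sup>2)) \<partial>(lborel \<Otimes>\<^sub>M lborel))"
  proof (intro nn_integral_cong)
    fix p
    have "sphere_weight p * (\<Sum>(l, m)\<in>I. (cmod (d l * sph_harm_at l m p))\<^sup>2 * C l)
        = (\<Sum>i\<in>I. w i * (sphere_weight p * (cmod (sph_harm_at (fst i) (snd i) p))\<^sup>2))"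
      by (simp add: w_def sum_distrib_left case_prod_beta norm_mult power_mult_distrib algebra_simps)
    also have "ennreal \<dots> = (\<Sum>i\<in>I. ennreal (w i) *
        ennreal (sphere_weight p * (cmod (sph_harm_at (fst i) (snd i) p))\<^sup>2))"
      using w_nonneg sphere_weight_nonneg[of p] by (simp add: ennreal_mult flip: sum_ennreal)
    finally show "(\<integral>\<^sup>+\<omega>. ennreal (sphere_weight p * (cmod (\<Sum>l\<in>L. d l * degree_component a l p \<omega>))\<^sup>2) \<partial>M) = \<dots>"
      unfolding nn_integral_coeffs_weighted_norm_sum_degree_components[OF assms] I_def[symmetric] .
  qed
  also have "\<dots> = (\<Sum>i\<in>I. ennreal (w i) *
      (\<integral>\<^sup>+p. ennreal (sphere_weight p * (cmod (sph_harm_at (fst i) (snd i) p))\<^sup>2) \<partial>(lborel \<Otimes>\<^sub>M lborel)))"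
    by (subst nn_integral_sum) (auto intro!: sum.cong nn_integral_cmult)
  also have "\<dots> = (\<Sum>i\<in>I. ennreal (w i))"
    by (intro sum.cong) (auto simp: I_def nn_integral_sphere_weight_norm_sph_harm_square)
  also have "\<dots> = ennreal (\<Sum>l\<in>L. \<Sum>m\<in>{- int l..int l}. w (l, m))"
    using w_nonneg assms unfolding I_def by (simp add: sum_ennreal sum.Sigma)
  also have "(\<Sum>l\<in>L. \<Sum>m\<in>{- int l..int l}. w (l, m)) = (\<Sum>l\<in>L. (cmod (d l))\<^sup>2 * C l * (2 * real l + 1))"
  proof (intro sum.cong refl)
    fix l
    have "card {- int l..int l} = 2 * l + 1"
      by simp
    then show "(\<Sum>m\<in>{- int l..int l}. w (l, m)) = (cmod (d l))\<^sup>2 * C l * (2 * real l + 1)"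
      by (simp add: w_def)
  qed
  finally show ?thesis .
qed

lemma nn_integral_weighted_norm_degree_component_le:
  "(\<integral>\<^sup>+\<omega>. \<integral>\<^sup>+p. ennreal (sphere_weight p * cmod (degree_component a l p \<omega>)) \<partial>(lborel \<Otimes>\<^sub>M lborel) \<partial>M)
     \<le> ennreal ((real l + 1)\<^sup>2 / 2 * (C l * (2 * real l + 1)) + pi\<^sup>2 / (real l + 1)\<^sup>2)"
proof -
  define A where "A = (real l + 1)\<^sup>2 / 2"
  define B where "B = 1 / (2 * (real l + 1)\<^sup>2)"
  have "A \<ge> 0" "B \<ge> 0"
    unfolding A_def B_def by simp_all
  define T where "T p \<omega> = cmod (degree_component a l p \<omega>)" for p \<omega>
  have [measurable]: "(\<lambda>x. T (snd x) (fst x)) \<in> borel_measurable (M \<Otimes>\<^sub>M (lborel \<Otimes>\<^sub>M lborel))"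
    "(\<lambda>p. T p \<omega>) \<in> borel_measurable (lborel \<Otimes>\<^sub>M lborel)" for \<omega>
    unfolding T_def degree_component_def by measurable
  have amgm: "ennreal (sphere_weight p * T p \<omega>)
      \<le> ennreal A * ennreal (sphere_weight p * (T p \<omega>)\<^sup>2) + ennreal B * ennreal (sphere_weight p)" for p \<omega>
  proof -
    have "sphere_weight p * T p \<omega> \<le> A * (sphere_weight p * (T p \<omega>)\<^sup>2) + B * sphere_weight p"
      using mult_le_half_square_plus[of "sphere_weight p" "real l + 1" "T p \<omega>"] sphere_weight_nonneg[of p]
      unfolding A_def B_def by simp
    then show ?thesis
      using sphere_weight_nonneg[of p] \<open>A \<ge> 0\<close> \<open>B \<ge> 0\<close>
      by (simp add: ennreal_mult[symmetric] ennreal_plus[symmetric] ennreal_leI del: ennreal_plus)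
  qed
  have "(\<integral>\<^sup>+\<omega>. \<integral>\<^sup>+p. ennreal (sphere_weight p * T p \<omega>) \<partial>(lborel \<Otimes>\<^sub>M lborel) \<partial>M)
      \<le> (\<integral>\<^sup>+\<omega>. \<integral>\<^sup>+p. ennreal A * ennreal (sphere_weight p * (T p \<omega>)\<^sup>2) + ennreal B * ennreal (sphere_weight p)
            \<partial>(lborel \<Otimes>\<^sub>M lborel) \<partial>M)"
    by (intro nn_integral_mono amgm)
  also have "\<dots> = ennreal A * (\<integral>\<^sup>+\<omega>. \<integral>\<^sup>+p. ennreal (sphere_weight p * (T p \<omega>)\<^sup>2) \<partial>(lborel \<Otimes>\<^sub>M lborel) \<partial>M)
      + ennreal B * (\<integral>\<^sup>+p. ennreal (sphere_weight p) \<partial>(lborel \<Otimes>\<^sub>M lborel))"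
    by (simp add: nn_integral_add nn_integral_cmult emeasure_space_1)
  also have "\<dots> \<le> ennreal A * ennreal (C l * (2 * real l + 1)) + ennreal B * ennreal (2 * pi\<^sup>2)"
    using nn_integral_weighted_norm_sum_degree_components[of "{l}" "\<lambda>_. 1"] nn_integral_sphere_weight_le
    unfolding T_def by (intro add_mono mult_left_mono) (auto simp: mult.commute)
  also have "\<dots> = ennreal ((real l + 1)\<^sup>2 / 2 * (C l * (2 * real l + 1)) + pi\<^sup>2 / (real l + 1)\<^sup>2)"
    using \<open>A \<ge> 0\<close> \<open>B \<ge> 0\<close> spectrum_nonneg[of l]
    by (simp add: A_def B_def ennreal_mult[symmetric] ennreal_plus[symmetric] del: ennreal_plus)
  finally show ?thesis
    unfolding T_def .
qed

lemma summable_degree_component_bounds: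
  assumes "summable (\<lambda>l. (2 * real l + 1) ^ 3 * C l)"
  shows "summable (\<lambda>l. (real l + 1)\<^sup>2 / 2 * (C l * (2 * real l + 1)) + pi\<^sup>2 / (real l + 1)\<^sup>2)"
proof (rule summable_add)
  show "summable (\<lambda>l. (real l + 1)\<^sup>2 / 2 * (C l * (2 * real l + 1)))"
  proof (rule summable_comparison_test'[OF assms])
    fix l
    have "(real l + 1)\<^sup>2 / 2 \<le> (2 * real l + 1)\<^sup>2"
      by (simp add: power2_eq_square algebra_simps)
    then have "(real l + 1)\<^sup>2 / 2 * (C l * (2 * real l + 1)) \<le> (2 * real l + 1)\<^sup>2 * (C l * (2 * real l + 1))"
      using spectrum_nonneg[of l] by (intro mult_right_mono) auto
    then show "norm ((real l + 1)\<^sup>2 / 2 * (C l * (2 * real l + 1))) \<le> (2 * real l + 1) ^ 3 * C l"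
      using spectrum_nonneg[of l] by (simp add: power2_eq_square power3_eq_cube algebra_simps)
  qed
  show "summable (\<lambda>l. pi\<^sup>2 / (real l + 1)\<^sup>2)"
    using summable_mult[OF sums_summable[OF inverse_squares_sums], of "pi\<^sup>2"] by (simp add: add.commute)
qed

text \<open>\<open>sol\<close> is defined by \<open>suminf\<close>, whose value is arbitrary where the series diverges; this
  lemma is what identifies it with the limit of the partial sums almost everywhere.\<close>

lemma AE_summable_degree_components:
  assumes "summable (\<lambda>l. (2 * real l + 1) ^ 3 * C l)"
  shows "AE \<omega> in M. AE p in lborel \<Otimes>\<^sub>M lborel. 0 < sphere_weight p \<longrightarrow> summable (\<lambda>l. cmod (degree_component a l p \<omega>))"
proof -
  define b where "b l = (real l + 1)\<^sup>2 / 2 * (C l * (2 * real l + 1)) + pi\<^sup>2 / (real l + 1)\<^sup>2" for l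
  define Q where "Q p \<omega> = (\<Sum>l. ennreal (sphere_weight p * cmod (degree_component a l p \<omega>)))" for p \<omega>
  have [measurable]: "(\<lambda>x. Q (snd x) (fst x)) \<in> borel_measurable (M \<Otimes>\<^sub>M (lborel \<Otimes>\<^sub>M lborel))"
    "(\<lambda>p. Q p \<omega>) \<in> borel_measurable (lborel \<Otimes>\<^sub>M lborel)" for \<omega>
    unfolding Q_def degree_component_def by measurable
  have "summable b"
    unfolding b_def by (rule summable_degree_component_bounds[OF assms])
  have "(\<integral>\<^sup>+\<omega>. \<integral>\<^sup>+p. Q p \<omega> \<partial>(lborel \<Otimes>\<^sub>M lborel) \<partial>M)
      = (\<Sum>l. \<integral>\<^sup>+\<omega>. \<integral>\<^sup>+p. ennreal (sphere_weight p * cmod (degree_component a l p \<omega>)) \<partial>(lborel \<Otimes>\<^sub>M lborel) \<partial>M)"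
    unfolding Q_def degree_component_def by (simp add: nn_integral_suminf)
  also have "\<dots> \<le> (\<Sum>l. ennreal (b l))"
    unfolding b_def by (intro suminf_le nn_integral_weighted_norm_degree_component_le) auto
  also have "\<dots> = ennreal (\<Sum>l. b l)"
    using spectrum_nonneg by (intro suminf_ennreal2[OF _ \<open>summable b\<close>]) (simp add: b_def)
  finally have "(\<integral>\<^sup>+\<omega>. \<integral>\<^sup>+p. Q p \<omega> \<partial>(lborel \<Otimes>\<^sub>M lborel) \<partial>M) \<noteq> \<infinity>"
    using neq_top_trans[OF ennreal_neq_top] by simp
  then have "AE \<omega> in M. AE p in lborel \<Otimes>\<^sub>M lborel. Q p \<omega> \<noteq> \<infinity>"
    by (rule AE_AE_nn_integral_nn_integral_PInf) (auto intro: lborel_pair.P.borel_measurable_nn_integral simp: case_prod_beta')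
  moreover have "summable (\<lambda>l. cmod (degree_component a l p \<omega>))" if "Q p \<omega> \<noteq> \<infinity>" "0 < sphere_weight p" for p \<omega>
  proof -
    have "summable (\<lambda>l. sphere_weight p * cmod (degree_component a l p \<omega>))"
      using that unfolding Q_def by (intro summable_suminf_not_top) auto
    then show ?thesis
      using summable_mult[of _ "1 / sphere_weight p"] \<open>0 < sphere_weight p\<close> by fastforce
  qed
  ultimately show ?thesis
    by (elim eventually_mono) blast
qed

lemma nn_integral_weighted_norm_partial_sum_le:
  assumes "summable (\<lambda>l. (2 * real l + 1) ^ 3 * C l)" and "0 \<le> B"
    and d: "\<And>l. cmod (d l) \<le> B * (real l + 1)"
  shows "(\<integral>\<^sup>+\<omega>. \<integral>\<^sup>+p. ennreal (sphere_weight p * (cmod (\<Sum>l<n. d l * degree_component a l p \<omega>))\<^sup>2)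
            \<partial>(lborel \<Otimes>\<^sub>M lborel) \<partial>M)
         \<le> ennreal (B\<^sup>2 * (\<Sum>l. (2 * real l + 1) ^ 3 * C l))"
proof -
  have "(\<Sum>l<n. (cmod (d l))\<^sup>2 * C l * (2 * real l + 1)) \<le> (\<Sum>l<n. B\<^sup>2 * ((2 * real l + 1) ^ 3 * C l))"
  proof (rule sum_mono)
    fix l
    have "B * (real l + 1) \<le> B * (2 * real l + 1)"
      using \<open>0 \<le> B\<close> by (intro mult_left_mono) auto
    then have "cmod (d l) \<le> B * (2 * real l + 1)"
      using d[of l] by linarith
    then have "(cmod (d l))\<^sup>2 \<le> (B * (2 * real l + 1))\<^sup>2"
      by (intro power_mono) auto
    then have "(cmod (d l))\<^sup>2 \<le> B\<^sup>2 * (2 * real l + 1)\<^sup>2"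
      by (simp add: power_mult_distrib)
    then have "(cmod (d l))\<^sup>2 * (C l * (2 * real l + 1)) \<le> B\<^sup>2 * (2 * real l + 1)\<^sup>2 * (C l * (2 * real l + 1))"
      using spectrum_nonneg[of l] by (intro mult_right_mono) auto
    then show "(cmod (d l))\<^sup>2 * C l * (2 * real l + 1) \<le> B\<^sup>2 * ((2 * real l + 1) ^ 3 * C l)"
      by (simp add: power2_eq_square power3_eq_cube algebra_simps)
  qed
  also have "\<dots> \<le> B\<^sup>2 * (\<Sum>l. (2 * real l + 1) ^ 3 * C l)"
    unfolding sum_distrib_left[symmetric] using spectrum_nonneg assms(1)
    by (intro mult_left_mono sum_le_suminf) auto
  finally show ?thesis
    by (simp add: nn_integral_weighted_norm_sum_degree_components ennreal_leI)
qed

lemma nn_integral_weighted_norm_sol_increment_le: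
  assumes "0 < c" "0 < D" "0 < k" "0 \<le> t" "0 \<le> h"
    and spectrum: "summable (\<lambda>l. (2 * real l + 1) ^ 3 * C l)"
  shows "(\<integral>\<^sup>+\<omega>. \<integral>\<^sup>+p. ennreal (sphere_weight p *
            (cmod (sol a c D k (fst p) (snd p) (t + h) \<omega> - sol a c D k (fst p) (snd p) t \<omega>))\<^sup>2)
            \<partial>(lborel \<Otimes>\<^sub>M lborel) \<partial>M)
         \<le> ennreal ((h * (2 * decay_rate c D + c * k))\<^sup>2 * (\<Sum>l. (2 * real l + 1) ^ 3 * C l))"
proof -
  define d where "d l = complex_of_real (mode_amplitude c D k l (t + h) - mode_amplitude c D k l t)" for l
  define G where "G n p \<omega> = ennreal (sphere_weight p * (cmod (\<Sum>l<n. d l * degree_component a l p \<omega>))\<^sup>2)"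
    for n p \<omega>
  have [measurable]: "(\<lambda>x. G n (snd x) (fst x)) \<in> borel_measurable (M \<Otimes>\<^sub>M (lborel \<Otimes>\<^sub>M lborel))"
    "(\<lambda>p. G n p \<omega>) \<in> borel_measurable (lborel \<Otimes>\<^sub>M lborel)" for n \<omega>
    unfolding G_def degree_component_def by measurable
  have "ennreal (sphere_weight p * (cmod (sol a c D k (fst p) (snd p) (t + h) \<omega> - sol a c D k (fst p) (snd p) t \<omega>))\<^sup>2)
      \<le> liminf (\<lambda>n. G n p \<omega>)"
    if "0 < sphere_weight p \<longrightarrow> summable (\<lambda>l. cmod (degree_component a l p \<omega>))" for p \<omega>
  proof (cases "sphere_weight p = 0")
    case False
    then have "(\<lambda>l. d l * degree_component a l p \<omega>)
        sums (sol a c D k (fst p) (snd p) (t + h) \<omega> - sol a c D k (fst p) (snd p) t \<omega>)"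
      unfolding d_def using that sphere_weight_nonneg[of p] assms by (intro sol_increment_sums) auto
    then have "(\<lambda>n. G n p \<omega>) \<longlonglongrightarrow> ennreal (sphere_weight p *
        (cmod (sol a c D k (fst p) (snd p) (t + h) \<omega> - sol a c D k (fst p) (snd p) t \<omega>))\<^sup>2)"
      unfolding G_def sums_def by (intro tendsto_ennrealI tendsto_intros)
    then show ?thesis
      by (simp add: lim_imp_Liminf)
  qed simp
  then have "(\<integral>\<^sup>+\<omega>. \<integral>\<^sup>+p. ennreal (sphere_weight p *
            (cmod (sol a c D k (fst p) (snd p) (t + h) \<omega> - sol a c D k (fst p) (snd p) t \<omega>))\<^sup>2)
            \<partial>(lborel \<Otimes>\<^sub>M lborel) \<partial>M)
      \<le> liminf (\<lambda>n. \<integral>\<^sup>+\<omega>. \<integral>\<^sup>+p. G n p \<omega> \<partial>(lborel \<Otimes>\<^sub>M lborel) \<partial>M)"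
    using AE_summable_degree_components[OF spectrum]
    by (intro nn_integral_nn_integral_le_liminf)
       (auto elim!: eventually_mono intro: lborel_pair.P.borel_measurable_nn_integral simp: case_prod_beta')
  also have "\<dots> \<le> ennreal ((h * (2 * decay_rate c D + c * k))\<^sup>2 * (\<Sum>l. (2 * real l + 1) ^ 3 * C l))"
  proof (intro Liminf_le always_eventually allI)
    have "0 \<le> h * (2 * decay_rate c D + c * k)"
      using assms decay_rate_pos[OF assms(1-3)] by simp
    moreover have "cmod (d l) \<le> h * (2 * decay_rate c D + c * k) * (real l + 1)" for l
      using mode_amplitude_lipschitz[OF assms(1-5), of l] unfolding d_def norm_of_real by (simp add: mult.assoc)
    ultimately show "(\<integral>\<^sup>+\<omega>. \<integral>\<^sup>+p. G n p \<omega> \<partial>(lborel \<Otimes>\<^sub>M lborel) \<partial>M)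
        \<le> ennreal ((h * (2 * decay_rate c D + c * k))\<^sup>2 * (\<Sum>l. (2 * real l + 1) ^ 3 * C l))" for n
      unfolding G_def by (rule nn_integral_weighted_norm_partial_sum_le[OF spectrum])
  qed simp
  finally show ?thesis .
qed

end

theorem theorem4:
  fixes M :: "'a measure" and C :: "nat \<Rightarrow> real"
    and a :: "nat \<Rightarrow> int \<Rightarrow> 'a \<Rightarrow> complex" and c D k :: real
  assumes "0 < c" and "0 < D" and "0 < k"
    and "gaussian_isotropic_coeffs M C a"
    and "summable (\<lambda>l. (2 * real l + 1) ^ 3 * C l)"
  shows "\<exists>K>0. \<forall>t>0. \<forall>\<^sub>F h in at_right 0.
           L2_sphere_norm M (\<lambda>\<theta> \<phi> \<omega>. sol a c D k \<theta> \<phi> (t + h) \<omega> - sol a c D k \<theta> \<phi> t \<omega>)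
             \<le> ennreal (K * h)"
proof -
  interpret isotropic_coeffs M C a
    by unfold_locales fact
  define L where "L = 2 * decay_rate c D + c * k"
  define S where "S = (\<Sum>l. (2 * real l + 1) ^ 3 * C l)"
  have "0 \<le> L"
    using assms(1-3) decay_rate_pos[OF assms(1-3)] by (simp add: L_def)
  have "0 \<le> S"
    unfolding S_def using assms(5) spectrum_nonneg by (intro suminf_nonneg) auto
  have "L2_sphere_norm M (\<lambda>\<theta> \<phi> \<omega>. sol a c D k \<theta> \<phi> (t + h) \<omega> - sol a c D k \<theta> \<phi> t \<omega>)
      \<le> ennreal ((L * sqrt S + 1) * h)" if "0 < t" "0 < h" for t h
  proof -
    have "L2_sphere_norm M (\<lambda>\<theta> \<phi> \<omega>. sol a c D k \<theta> \<phi> (t + h) \<omega> - sol a c D k \<theta> \<phi> t \<omega>)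
        \<le> ennreal (h * L * sqrt S)"
      using nn_integral_weighted_norm_sol_increment_le[OF assms(1-3) _ _ assms(5), of t h] that \<open>0 \<le> L\<close> \<open>0 \<le> S\<close>
      by (intro L2_sphere_norm_le) (auto simp: L_def S_def power_mult_distrib)
    also have "\<dots> \<le> ennreal ((L * sqrt S + 1) * h)"
      using that by (intro ennreal_leI) (simp add: algebra_simps)
    finally show ?thesis .
  qed
  moreover have "0 < L * sqrt S + 1"
    using \<open>0 \<le> L\<close> \<open>0 \<le> S\<close> by (simp add: add_nonneg_pos)
  ultimately show ?thesis
    by (intro exI[of _ "L * sqrt S + 1"]) (auto intro!: eventually_at_rightI[of 0 1])
qed

end
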